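(* Let $k$ be a field, let $p\ge 1$, and let $n_1<n_2<\cdots<n_p$ be positive integers with $\gcd(n_1,\dots,n_p)=1$. Let $S=\langle (0,n_p),(n_1,n_p-n_1),(n_2,n_p-n_2),\dots,(n_{p-1},n_p-n_{p-1}),(n_p,0)\rangle\subseteq\mathbb{N}^2$ and put $n_0=0$. Then the Hilbert–Kunz multiplicity of $k[S]$ is \[e_{\mathrm{HK}}(k[S])=1+\frac{1}{n_p}\left(\sum_{r=1}^p(n_r-1)(n_r-n_{r-1})\right).\]
   Context: $k[S]=\bigoplus_{(s_1,s_2)\in S}k\,t^{s_1}u^{s_2}\subseteq k[t,u]$ is the semigroup ring of $S$, a graded $k$-algebra of dimension $2$ with homogeneous maximal ideal $\mathfrak{m}$ generated by the monomials $t^{s_1}u^{s_2}$ for the listed generators $(s_1,s_2)$ of $S$. For a $D$-dimensional graded $k$-algebra $R$ with homogeneous maximal ideal $\mathfrak{m}=\langle x_1,\dots,x_s\rangle$, set $\mathfrak{m}^{[n]}=\langle x_1^n,\dots,x_s^n\rangle$; the Hilbert–Kunz multiplicity is $e_{\mathrm{HK}}(R)=\lim_{n\to\infty}\ell_R(R/\mathfrak{m}^{[n]})/n^{D}$ (in positive characteristic $q$, taken along $n=q^e$). *)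

theory Defs
  imports "HOL-Analysis.Analysis" "HOL-Library.Poly_Mapping" "HOL-Library.Product_Plus"
    "HOL-Library.Extended_Nat"
begin

inductive_set semigroup_gen :: "(nat \<times> nat) set \<Rightarrow> (nat \<times> nat) set" for G where
  zero: "(0,0) \<in> semigroup_gen G"
| add: "g \<in> G \<Longrightarrow> s \<in> semigroup_gen G \<Longrightarrow> g + s \<in> semigroup_gen G"

text \<open>The polynomial ring k[t,u]: an element is a finitely supported map from exponent
  pairs (a,b) (standing for t^a u^b) to coefficients; multiplication is convolution.\<close>
type_synonym 'k poly2 = "(nat \<times> nat) \<Rightarrow>\<^sub>0 'k"

definition semigroup_ring :: "(nat \<times> nat) set \<Rightarrow> 'k::field poly2 set" where
  "semigroup_ring S = {f. Poly_Mapping.keys f \<subseteq> S}"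

definition monom2 :: "nat \<times> nat \<Rightarrow> 'k::field poly2" where
  "monom2 s = Poly_Mapping.single s 1"

definition is_ideal_in :: "'a::comm_ring_1 set \<Rightarrow> 'a set \<Rightarrow> bool" where
  "is_ideal_in R J \<longleftrightarrow> J \<subseteq> R \<and> 0 \<in> J \<and> (\<forall>x\<in>J. \<forall>y\<in>J. x + y \<in> J)
      \<and> (\<forall>r\<in>R. \<forall>x\<in>J. r * x \<in> J)"

definition gen_ideal :: "'a::comm_ring_1 set \<Rightarrow> 'i set \<Rightarrow> ('i \<Rightarrow> 'a) \<Rightarrow> 'a set" where
  "gen_ideal R G x = {\<Sum>g\<in>G. c g * x g | c. \<forall>g\<in>G. c g \<in> R}"

text \<open>Length of the R-module R/I: supremum of lengths l of chains of submodules
  0 = M_0 < M_1 < ... < M_l = R/I, i.e. of chains of ideals I = J_0 < ... < J_l = R.\<close>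
definition quot_length :: "'a::comm_ring_1 set \<Rightarrow> 'a set \<Rightarrow> enat" where
  "quot_length R I = Sup {enat (length Js - 1) | Js. Js \<noteq> [] \<and> hd Js = I \<and> last Js = R
      \<and> (\<forall>J\<in>set Js. is_ideal_in R J) \<and> sorted_wrt (\<subset>) Js}"

text \<open>Length of k[S]/m^[n], where m is generated by the monomials of the generators G of S.\<close>
definition hk_length :: "'k::field itself \<Rightarrow> (nat \<times> nat) set \<Rightarrow> nat \<Rightarrow> enat" where
  "hk_length TYPE('k) G n =
     quot_length (semigroup_ring (semigroup_gen G) :: 'k poly2 set)
       (gen_ideal (semigroup_ring (semigroup_gen G)) G (\<lambda>g. (monom2 g :: 'k poly2) ^ n))"

text \<open>e_HK(k[S]) = e for the 2-dimensional ring k[S]: the limit of l(R/m^[n])/n^2,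
  taken over all n in characteristic 0 and along n = q^e in characteristic q > 0.
  We also record that all these lengths are finite.\<close>
definition has_ehk :: "'k::field itself \<Rightarrow> (nat \<times> nat) set \<Rightarrow> real \<Rightarrow> bool" where
  "has_ehk TYPE('k) G e \<longleftrightarrow>
     (\<forall>n. hk_length TYPE('k) G n \<noteq> \<infinity>) \<and>
     (if CHAR('k) = 0
      then (\<lambda>n. real (the_enat (hk_length TYPE('k) G n)) / real n ^ 2) \<longlonglongrightarrow> e
      else (\<lambda>j. real (the_enat (hk_length TYPE('k) G (CHAR('k) ^ j))) / real (CHAR('k) ^ j) ^ 2)
             \<longlonglongrightarrow> e)"

end

theory Submission
  imports Defs "HOL-Real_Asymp.Real_Asymp"
begin

text \<open>Write \<open>N = n\<^sub>p\<close> and \<open>A = {n\<^sub>0, ..., n\<^sub>p}\<close>. The elements of \<open>S\<close> of degree \<open>d\<close> are the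
  pairs \<open>(x, d N - x)\<close> with \<open>x\<close> in the \<open>d\<close>-fold sumset \<open>d A\<close>, and \<open>m^[n]\<close> is the monomial
  ideal spanned by \<open>\<Union>\<^sub>r (n g\<^sub>r + S)\<close>. A leading-exponent argument shows that the length of a
  monomial quotient is the number of exponents outside the ideal, so the length of \<open>k[S]/m^[n]\<close> counts the
  points of \<open>S\<close> not covered by the translates \<open>n g\<^sub>r + S\<close>.

  By the structure theorem for sumsets, \<open>m A\<close> contains \<open>[c, m N - c]\<close> for all large \<open>m\<close>.
  Hence, up to \<open>O(n)\<close> points, the uncovered points are all points of degree \<open>< n\<close>
  (about \<open>N n\<^sup>2 / 2\<close>) together with, for each \<open>r\<close>, a triangle of area
  \<open>(n (n\<^sub>r - n\<^sub>r\<^sub>-\<^sub>1))\<^sup>2 / (2 N)\<close>. Thus the length of \<open>k[S]/m^[n]\<close> is \<open>e n\<^sup>2 + O(n)\<close> with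
  \<open>e = N / 2 + \<Sum>\<^sub>r (n\<^sub>r - n\<^sub>r\<^sub>-\<^sub>1)\<^sup>2 / (2 N)\<close>, which telescopes to the stated formula.\<close>

section \<open>Sumsets of natural numbers\<close>

fun sumset :: "nat set \<Rightarrow> nat \<Rightarrow> nat set" where
  "sumset B 0 = {0}"
| "sumset B (Suc d) = {b + y | b y. b \<in> B \<and> y \<in> sumset B d}"

lemma sumset_Suc_if_0: "0 \<in> B \<Longrightarrow> x \<in> sumset B d \<Longrightarrow> x \<in> sumset B (Suc d)"
  by auto (metis add_0)

lemma sumset_mono:
  assumes "0 \<in> B" "d \<le> d'" "x \<in> sumset B d"
  shows "x \<in> sumset B d'"
  using assms(2) by (induction d' rule: dec_induct) (use assms sumset_Suc_if_0 in auto)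

lemma sumset_add: "x \<in> sumset B i \<Longrightarrow> y \<in> sumset B j \<Longrightarrow> x + y \<in> sumset B (i + j)"
proof (induction i arbitrary: x)
  case (Suc i)
  then obtain b z where "b \<in> B" "z \<in> sumset B i" "x = b + z" by auto
  with Suc.IH[of z] Suc.prems show ?case by auto (metis add.assoc)
qed simp

lemma sumset_mult: "x \<in> sumset B d \<Longrightarrow> k * x \<in> sumset B (k * d)"
  by (induction k) (auto dest: sumset_add)

lemma sumset_add_multiple: "N \<in> B \<Longrightarrow> x \<in> sumset B d \<Longrightarrow> x + k * N \<in> sumset B (d + k)"
  using sumset_add[of x B d "k * N" k] sumset_mult[of N B 1 k] by auto

lemma sumset_le: "B \<subseteq> {..N} \<Longrightarrow> x \<in> sumset B d \<Longrightarrow> x \<le> d * N"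
proof (induction d arbitrary: x)
  case (Suc d)
  then obtain b z where "b \<in> B" "z \<in> sumset B d" "x = b + z" by auto
  with Suc show ?case by fastforce
qed simp

text \<open>With \<open>0 \<in> B\<close>, an element \<open>x\<close> of a sumset needs at most \<open>x\<close> nonzero summands.\<close>

lemma sumset_downward: "0 \<in> B \<Longrightarrow> x \<in> sumset B d \<Longrightarrow> x \<le> j \<Longrightarrow> x \<in> sumset B j"
proof (induction d arbitrary: x j)
  case 0
  then show ?case using sumset_mono[of B 0 j] by simp
next
  case (Suc d)
  then obtain b z where bz: "b \<in> B" "z \<in> sumset B d" "x = b + z" by auto
  show ?case
  proof (cases "b = 0")
    case True
    then show ?thesis using Suc bz by auto
  next
    case False
    then obtain j' where j': "j = Suc j'" "z \<le> j'" using Suc.prems bz by (cases j) auto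
    then have "z \<in> sumset B j'" using Suc.IH bz Suc.prems by blast
    then show ?thesis using bz j' by auto
  qed
qed

definition reflect :: "nat \<Rightarrow> nat set \<Rightarrow> nat set" where
  "reflect N B = (\<lambda>b. N - b) ` B"

lemma reflect_subset: "reflect N B \<subseteq> {..N}"
  unfolding reflect_def by auto

lemma reflect_reflect: "B \<subseteq> {..N} \<Longrightarrow> reflect N (reflect N B) = B"
  unfolding reflect_def image_image by (auto simp: subset_iff image_iff)

lemma zero_in_reflect: "N \<in> B \<Longrightarrow> 0 \<in> reflect N B"
  and in_reflect_if_0: "0 \<in> B \<Longrightarrow> N \<in> reflect N B"
  unfolding reflect_def by force+

lemma sumset_reflect:
  assumes "B \<subseteq> {..N}" "x \<in> sumset B d"
  shows "d * N - x \<in> sumset (reflect N B) d"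
  using assms(2)
proof (induction d arbitrary: x)
  case (Suc d)
  then obtain b z where bz: "b \<in> B" "z \<in> sumset B d" "x = b + z" by auto
  have "z \<le> d * N" "b \<le> N" using sumset_le[OF assms(1) bz(2)] assms(1) bz(1) by auto
  then have "Suc d * N - x = (N - b) + (d * N - z)" using bz by simp
  moreover have "N - b \<in> reflect N B" using bz unfolding reflect_def by auto
  ultimately show ?case using Suc.IH[OF bz(2)] by auto
qed simp

lemma sumset_reflect_iff:
  assumes "B \<subseteq> {..N}" "x \<le> d * N"
  shows "d * N - x \<in> sumset (reflect N B) d \<longleftrightarrow> x \<in> sumset B d"
  using sumset_reflect[OF reflect_subset, of "d * N - x" N B d] sumset_reflect[OF assms(1), of x d]
    reflect_reflect[OF assms(1)] assms(2) by auto

definition sum_monoid :: "nat set \<Rightarrow> nat set" where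
  "sum_monoid B = (\<Union>d. sumset B d)"

lemma zero_in_sum_monoid: "0 \<in> sum_monoid B"
  unfolding sum_monoid_def using sumset.simps(1) by blast

lemma subset_sum_monoid: "B \<subseteq> sum_monoid B"
proof
  fix b assume "b \<in> B"
  then have "b \<in> sumset B 1" by force
  then show "b \<in> sum_monoid B" unfolding sum_monoid_def by blast
qed

lemma sum_monoid_add: "x \<in> sum_monoid B \<Longrightarrow> y \<in> sum_monoid B \<Longrightarrow> x + y \<in> sum_monoid B"
  unfolding sum_monoid_def using sumset_add by blast

lemma sum_monoid_mult: "x \<in> sum_monoid B \<Longrightarrow> k * x \<in> sum_monoid B"
  unfolding sum_monoid_def using sumset_mult by blast

lemma sum_monoid_sum:
  "finite X \<Longrightarrow> (\<And>x. x \<in> X \<Longrightarrow> f x \<in> sum_monoid B) \<Longrightarrow> (\<Sum>x\<in>X. f x) \<in> sum_monoid B"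
  by (induction X rule: finite_induct) (auto intro: sum_monoid_add zero_in_sum_monoid)

text \<open>Every \<open>y \<ge> v\<^sup>2\<close> is \<open>r (v + 1) + (q - r) v\<close>, where \<open>y = q v + r\<close> and \<open>r < v \<le> q\<close>.\<close>

lemma sum_monoid_cofinite_if_consecutive:
  assumes "v + 1 \<in> sum_monoid B" "v \<in> sum_monoid B"
  shows "\<exists>c. \<forall>y\<ge>c. y \<in> sum_monoid B"
proof (cases "v = 0")
  case True
  then show ?thesis using sum_monoid_mult[OF assms(1)] by (metis add_0 mult.right_neutral)
next
  case False
  have "y \<in> sum_monoid B" if y: "v * v \<le> y" for y
  proof -
    define q r where "q = y div v" and "r = y mod v"
    have "r < v" using False r_def by simp
    have "v \<le> q" using div_le_mono[OF y, of v] False unfolding q_def by simp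
    have "y = r * (v + 1) + (q - r) * v"
      using \<open>r < v\<close> \<open>v \<le> q\<close> unfolding q_def r_def
      by (simp add: algebra_simps diff_mult_distrib)
    then show ?thesis using sum_monoid_add sum_monoid_mult assms by metis
  qed
  then show ?thesis by blast
qed

lemma Gcd_int_combination:
  fixes X :: "nat set"
  assumes "finite X"
  shows "\<exists>z. (\<Sum>x\<in>X. z x * int x) = int (Gcd X)"
  using assms
proof (induction X rule: finite_induct)
  case (insert x X)
  then obtain z where z: "(\<Sum>y\<in>X. z y * int y) = int (Gcd X)" by blast
  obtain u v where uv: "u * int x + v * int (Gcd X) = gcd (int x) (int (Gcd X))"
    using bezout_int by blast
  define z' where "z' = (\<lambda>y. if y = x then u else v * z y)"
  have "(\<Sum>y\<in>X. z' y * int y) = (\<Sum>y\<in>X. v * (z y * int y))"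
    using insert.hyps(2) by (intro sum.cong) (auto simp: z'_def)
  then have "(\<Sum>y\<in>insert x X. z' y * int y) = u * int x + v * int (Gcd X)"
    using insert by (simp add: z'_def sum_distrib_left[symmetric] z)
  also have "\<dots> = int (Gcd (insert x X))" using uv by simp
  finally show ?case by blast
qed simp

lemma sum_monoid_cofinite:
  assumes "finite X" "Gcd X = 1" "X \<subseteq> sum_monoid B"
  shows "\<exists>c. \<forall>y\<ge>c. y \<in> sum_monoid B"
proof -
  obtain z where z: "(\<Sum>x\<in>X. z x * int x) = 1"
    using Gcd_int_combination[OF assms(1)] assms(2) by auto
  define u where "u = (\<Sum>x\<in>X. nat (max 0 (z x)) * x)"
  define v where "v = (\<Sum>x\<in>X. nat (max 0 (- z x)) * x)"
  have "int u - int v = (\<Sum>x\<in>X. (int (nat (max 0 (z x))) - int (nat (max 0 (- z x)))) * int x)"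
    unfolding u_def v_def by (simp add: sum_subtractf algebra_simps)
  also have "\<dots> = (\<Sum>x\<in>X. z x * int x)"
    by (rule sum.cong) (auto simp: max_def)
  finally have "u = v + 1" using z by simp
  moreover have "u \<in> sum_monoid B" "v \<in> sum_monoid B"
    unfolding u_def v_def using assms by (auto intro!: sum_monoid_sum sum_monoid_mult)
  ultimately show ?thesis using sum_monoid_cofinite_if_consecutive by blast
qed

lemma Gcd_reflect_dvd:
  assumes "B \<subseteq> {..N}" "0 \<in> B"
  shows "Gcd (reflect N B) dvd Gcd B"
proof (rule Gcd_greatest)
  fix b assume "b \<in> B"
  have "N \<in> reflect N B" "N - b \<in> reflect N B"
    using \<open>b \<in> B\<close> assms(2) unfolding reflect_def by force+
  then have "Gcd (reflect N B) dvd N" "Gcd (reflect N B) dvd N - b" by (auto intro: Gcd_dvd)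
  moreover have "N - (N - b) = b" using \<open>b \<in> B\<close> assms(1) by auto
  ultimately show "Gcd (reflect N B) dvd b" by (metis dvd_diff_nat)
qed

text \<open>Write \<open>y\<close> as an element of \<open>[c, c + N)\<close> plus copies of \<open>N \<in> B\<close>.\<close>

lemma sumset_eventually:
  assumes "B \<subseteq> {..N}" "0 \<in> B" "N \<in> B" "N \<ge> 1" "\<forall>y\<ge>c. y \<in> sum_monoid B"
  shows "\<exists>K. \<forall>y m. c \<le> y \<longrightarrow> K + y div N \<le> m \<longrightarrow> y \<in> sumset B m"
proof -
  have "\<forall>s\<in>{c..<c+N}. \<exists>i. s \<in> sumset B i" using assms(5) unfolding sum_monoid_def by auto
  then obtain i where i: "\<And>s. s \<in> {c..<c+N} \<Longrightarrow> s \<in> sumset B (i s)" by metis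
  define K where "K = Max (i ` {c..<c+N})"
  have "y \<in> sumset B m" if y: "c \<le> y" and m: "K + y div N \<le> m" for y m
  proof -
    define s q where "s = c + (y - c) mod N" and "q = (y - c) div N"
    have s: "s \<in> {c..<c+N}" using assms(4) s_def by simp
    have "s \<in> sumset B K"
      using sumset_mono[OF assms(2) _ i[OF s]] s unfolding K_def by simp
    then have "s + q * N \<in> sumset B (K + q)" using sumset_add_multiple[OF assms(3)] by simp
    moreover have "s + q * N = y" using y unfolding s_def q_def by simp
    moreover have "q \<le> y div N" unfolding q_def by (rule div_le_mono) simp
    ultimately show ?thesis using sumset_mono[OF assms(2), of "K + q" m] m by simp
  qed
  then show ?thesis by blast
qed

text \<open>The lower end of \<open>m A\<close> is controlled by the
  monoid generated by \<open>A\<close>, the upper end by the one generated by its reflection \<open>N - A\<close>.\<close>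

theorem sumset_contains_interval:
  assumes "A \<subseteq> {..N}" "0 \<in> A" "N \<in> A" "Gcd A = 1"
  shows "\<exists>c m0. \<forall>m y. m0 \<le> m \<longrightarrow> c \<le> y \<longrightarrow> y + c \<le> m * N \<longrightarrow> y \<in> sumset A m"
proof -
  let ?A' = "reflect N A"
  have N: "N \<ge> 1"
  proof (rule ccontr)
    assume "\<not> N \<ge> 1"
    then have "A = {0}" using assms(1,2) by auto
    then show False using assms(4) by simp
  qed
  have fin: "finite A" "finite ?A'"
    using finite_subset[OF assms(1)] finite_subset[OF reflect_subset] by auto
  have "Gcd ?A' = 1" using Gcd_reflect_dvd[OF assms(1,2)] assms(4) by simp
  obtain c1 where "\<forall>y\<ge>c1. y \<in> sum_monoid A"
    using sum_monoid_cofinite[OF fin(1) assms(4) subset_sum_monoid] by blast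
  then obtain K1 where K1: "\<forall>y m. c1 \<le> y \<longrightarrow> K1 + y div N \<le> m \<longrightarrow> y \<in> sumset A m"
    using sumset_eventually[OF assms(1-3) N] by blast
  obtain c2 where "\<forall>y\<ge>c2. y \<in> sum_monoid ?A'"
    using sum_monoid_cofinite[OF fin(2) \<open>Gcd ?A' = 1\<close> subset_sum_monoid] by blast
  then obtain K2 where K2: "\<forall>y m. c2 \<le> y \<longrightarrow> K2 + y div N \<le> m \<longrightarrow> y \<in> sumset ?A' m"
    using sumset_eventually[OF reflect_subset zero_in_reflect[OF assms(3)]
        in_reflect_if_0[OF assms(2)] N] by blast
  define c K where "c = max c1 c2" and "K = max K1 K2"
  have "y \<in> sumset A m" if m: "2 * K \<le> m" and y: "c \<le> y" "y + c \<le> m * N" for m y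
  proof (cases "K + y div N \<le> m")
    case True
    then show ?thesis using K1 y unfolding c_def K_def by auto
  next
    case False
    \<comment> \<open>then \<open>y\<close> lies near the top, and its reflection \<open>mN - y\<close> is covered by \<open>K2\<close>\<close>
    define z where "z = m * N - y"
    have "y div N * N \<le> y" using div_mult_mod_eq[of y N] by linarith
    then have "z \<le> (m - y div N) * N" unfolding z_def by (simp add: diff_mult_distrib diff_le_mono2)
    then have "z div N \<le> m - y div N" using div_le_mono[of z _ N] N by fastforce
    then have "K2 + z div N \<le> m" using False m unfolding K_def by linarith
    moreover have "c2 \<le> z" unfolding z_def c_def using y unfolding c_def by simp
    ultimately have "z \<in> sumset ?A' m" using K2 by blast
    then show ?thesis using sumset_reflect_iff[OF assms(1)] y(2) unfolding z_def by simp
  qed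
  then show ?thesis by blast
qed

section \<open>Length of monomial quotients\<close>

definition add_submonoid :: "(nat \<times> nat) set \<Rightarrow> bool" where
  "add_submonoid S \<longleftrightarrow> 0 \<in> S \<and> (\<forall>s\<in>S. \<forall>t\<in>S. s + t \<in> S)"

definition semigroup_ideal :: "(nat \<times> nat) set \<Rightarrow> (nat \<times> nat) set \<Rightarrow> bool" where
  "semigroup_ideal S E \<longleftrightarrow> E \<subseteq> S \<and> (\<forall>s\<in>E. \<forall>t\<in>S. s + t \<in> E)"

definition monomial_span :: "(nat \<times> nat) set \<Rightarrow> 'k::field poly2 set" where
  "monomial_span E = {f. Poly_Mapping.keys f \<subseteq> E}"

lemma semigroup_ring_eq_monomial_span: "semigroup_ring S = monomial_span S"
  unfolding semigroup_ring_def monomial_span_def ..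

lemma is_ideal_in_monomial_span:
  assumes "semigroup_ideal S E"
  shows "is_ideal_in (semigroup_ring S) (monomial_span E :: 'k::field poly2 set)"
  unfolding is_ideal_in_def
proof (intro conjI ballI)
  show "monomial_span E \<subseteq> semigroup_ring S"
    using assms unfolding semigroup_ideal_def monomial_span_def semigroup_ring_def by auto
  show "(0::'k poly2) \<in> monomial_span E" unfolding monomial_span_def by simp
  fix x y :: "'k poly2" assume "x \<in> monomial_span E" "y \<in> monomial_span E"
  then show "x + y \<in> monomial_span E" unfolding monomial_span_def using keys_add[of x y] by auto
next
  fix r x :: "'k poly2" assume r: "r \<in> semigroup_ring S" and x: "x \<in> monomial_span E"
  have "Poly_Mapping.keys (r * x) \<subseteq> E"
  proof
    fix k assume "k \<in> Poly_Mapping.keys (r * x)"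
    then obtain a b where ab: "a \<in> Poly_Mapping.keys r" "b \<in> Poly_Mapping.keys x" "k = a + b"
      using keys_mult[of r x] by blast
    then have "a \<in> S" "b \<in> E" using r x unfolding monomial_span_def semigroup_ring_def by auto
    then have "b + a \<in> E" using assms unfolding semigroup_ideal_def by blast
    then show "k \<in> E" using ab(3) by (simp add: add.commute)
  qed
  then show "r * x \<in> monomial_span E" unfolding monomial_span_def by simp
qed

lemma lookup_single_0_mult:
  "Poly_Mapping.lookup (Poly_Mapping.single 0 c * h) k = (c::'k::field) * Poly_Mapping.lookup h k"
  unfolding mult_map_scale_conv_mult[symmetric] by (simp add: Poly_Mapping.map.rep_eq when_def)

lemma is_ideal_in_single_0_mult:
  "0 \<in> S \<Longrightarrow> is_ideal_in (semigroup_ring S) J \<Longrightarrow> f \<in> J \<Longrightarrow> Poly_Mapping.single 0 (c::'k::field) * f \<in> J"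
  unfolding is_ideal_in_def semigroup_ring_def by simp

lemma is_ideal_in_diff:
  assumes "0 \<in> S" "is_ideal_in (semigroup_ring S) J" "f \<in> J" "g \<in> J"
  shows "f - g \<in> (J :: 'k::field poly2 set)"
proof -
  have "Poly_Mapping.single 0 (-1) * g \<in> J" using is_ideal_in_single_0_mult[OF assms(1,2,4)] .
  then have "f + Poly_Mapping.single 0 (-1) * g \<in> J" using assms(2,3) unfolding is_ideal_in_def by blast
  moreover have "f + Poly_Mapping.single 0 (-1) * g = f - g" by (simp add: single_uminus)
  ultimately show ?thesis by simp
qed

text \<open>Add an element of maximal total degree in the complement.\<close>

lemma semigroup_ideal_insert:
  assumes S: "add_submonoid S" and E: "semigroup_ideal S E" "finite (S - E)" "S - E \<noteq> {}"
  obtains s where "s \<in> S - E" "semigroup_ideal S (insert s E)"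
proof -
  define deg where "deg t = fst t + snd t" for t :: "nat \<times> nat"
  have fin: "finite (deg ` (S - E))" and ne: "deg ` (S - E) \<noteq> {}" using E(2,3) by auto
  obtain s where s: "s \<in> S - E" "deg s = Max (deg ` (S - E))" using Max_in[OF fin ne] by auto
  have smax: "deg t \<le> deg s" if "t \<in> S - E" for t using Max_ge[OF fin] that s(2) by simp
  have "s + t \<in> insert s E" if "t \<in> S" for t
  proof (cases "t = 0")
    case False
    then have "deg (s + t) > deg s" unfolding deg_def by (cases t) (auto simp: zero_prod_def)
    moreover have "s + t \<in> S" using S s(1) that unfolding add_submonoid_def by blast
    ultimately show ?thesis using smax[of "s + t"] by auto
  qed simp
  then have "semigroup_ideal S (insert s E)" using s(1) E(1) unfolding semigroup_ideal_def by auto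
  then show ?thesis using s(1) that by blast
qed

lemma hd_subset_of_sorted: "sorted_wrt (\<subset>) Js \<Longrightarrow> J \<in> set Js \<Longrightarrow> hd Js \<subseteq> J"
  by (cases Js) auto

lemma monomial_span_chain:
  assumes S: "add_submonoid S"
  shows "semigroup_ideal S E \<Longrightarrow> finite (S - E) \<Longrightarrow>
    \<exists>Js. Js \<noteq> [] \<and> hd Js = (monomial_span E :: 'k::field poly2 set) \<and> last Js = semigroup_ring S
      \<and> (\<forall>J\<in>set Js. is_ideal_in (semigroup_ring S) J) \<and> sorted_wrt (\<subset>) Js
      \<and> length Js = card (S - E) + 1"
proof (induction "card (S - E)" arbitrary: E)
  case 0
  have "S - E = {}" using "0.hyps"[symmetric] "0.prems"(2) card_0_eq by blast
  then have "E = S" using "0.prems"(1) unfolding semigroup_ideal_def by blast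
  then have "monomial_span E = (semigroup_ring S :: 'k poly2 set)"
    "is_ideal_in (semigroup_ring S) (monomial_span E :: 'k poly2 set)"
    using is_ideal_in_monomial_span[OF "0.prems"(1)] semigroup_ring_eq_monomial_span by auto
  then show ?case using "0.hyps"[symmetric] by (intro exI[of _ "[monomial_span E]"]) simp
next
  case (Suc k)
  have "S - E \<noteq> {}" using Suc.hyps(2) by (metis card.empty nat.distinct(1))
  then obtain s where s: "s \<in> S - E" and E': "semigroup_ideal S (insert s E)"
    using semigroup_ideal_insert[OF S Suc.prems] by blast
  have "S - insert s E = (S - E) - {s}" by blast
  then have card: "card (S - insert s E) = k"
    using card_Diff_singleton[OF s] Suc.hyps(2) by (metis diff_Suc_1)
  have "finite (S - insert s E)" using Suc.prems(2) by auto
  then obtain Js where Js: "Js \<noteq> []" "hd Js = (monomial_span (insert s E) :: 'k poly2 set)"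
      "last Js = semigroup_ring S" "\<forall>J\<in>set Js. is_ideal_in (semigroup_ring S) J"
      "sorted_wrt (\<subset>) Js" "length Js = card (S - insert s E) + 1"
    using Suc.hyps(1)[OF card[symmetric] E'] by blast
  have "(monomial_span E :: 'k poly2 set) \<subseteq> monomial_span (insert s E)"
    unfolding monomial_span_def by auto
  moreover have "Poly_Mapping.single s (1::'k) \<in> monomial_span (insert s E) - monomial_span E"
    using s unfolding monomial_span_def by simp
  ultimately have "(monomial_span E :: 'k poly2 set) \<subset> monomial_span (insert s E)" by blast
  then have "\<forall>J\<in>set Js. (monomial_span E :: 'k poly2 set) \<subset> J"
    using hd_subset_of_sorted[OF Js(5)] Js(2) by blast
  then have "sorted_wrt (\<subset>) (monomial_span E # Js)" using Js(5) by simp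
  moreover have "\<forall>J\<in>set (monomial_span E # Js). is_ideal_in (semigroup_ring S) J"
    using Js(4) is_ideal_in_monomial_span[OF Suc.prems(1)] by simp
  moreover have "last (monomial_span E # Js) = semigroup_ring S" using Js(1,3) by simp
  moreover have "length (monomial_span E # Js) = card (S - E) + 1"
    using Js(6) card Suc.hyps(2) by simp
  ultimately show ?case by (intro exI[of _ "monomial_span E # Js"]) simp
qed

text \<open>Leading exponents in \<open>M\<close> of the elements of \<open>J\<close>, for the well-order on \<open>nat \<times> nat\<close>
  induced by \<open>prod_encode\<close>; no compatibility with addition is needed.\<close>

definition lead_codes :: "(nat \<times> nat) set \<Rightarrow> 'k::field poly2 set \<Rightarrow> nat set" where
  "lead_codes M J =
     {Max (prod_encode ` (Poly_Mapping.keys f \<inter> M)) | f. f \<in> J \<and> Poly_Mapping.keys f \<inter> M \<noteq> {}}"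

lemma lead_codes_subset: "lead_codes M (J :: 'k::field poly2 set) \<subseteq> prod_encode ` M"
proof
  fix x assume "x \<in> lead_codes M J"
  then obtain f :: "'k poly2" where f: "x = Max (prod_encode ` (Poly_Mapping.keys f \<inter> M))"
      "Poly_Mapping.keys f \<inter> M \<noteq> {}"
    unfolding lead_codes_def by blast
  then have "x \<in> prod_encode ` (Poly_Mapping.keys f \<inter> M)" by simp
  then show "x \<in> prod_encode ` M" by auto
qed

lemma lead_codes_mono: "J1 \<subseteq> J2 \<Longrightarrow> lead_codes M J1 \<subseteq> lead_codes M J2"
  unfolding lead_codes_def by blast

lemma lead_cancel:
  fixes f h :: "'k::field poly2"
  assumes f: "\<forall>s\<in>Poly_Mapping.keys f \<inter> M. prod_encode s \<le> k"
    and h: "\<forall>s\<in>Poly_Mapping.keys h \<inter> M. prod_encode s \<le> k"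
    and s0: "s0 \<in> Poly_Mapping.keys h" "prod_encode s0 = k"
  defines "c \<equiv> Poly_Mapping.lookup f s0 / Poly_Mapping.lookup h s0"
  shows "\<forall>s\<in>Poly_Mapping.keys (f - Poly_Mapping.single 0 c * h) \<inter> M. prod_encode s < k"
proof
  fix s assume s: "s \<in> Poly_Mapping.keys (f - Poly_Mapping.single 0 c * h) \<inter> M"
  have lookup: "Poly_Mapping.lookup (f - Poly_Mapping.single 0 c * h) t
      = Poly_Mapping.lookup f t - c * Poly_Mapping.lookup h t" for t
    by (simp add: lookup_minus lookup_single_0_mult)
  then have "s \<in> Poly_Mapping.keys f \<or> s \<in> Poly_Mapping.keys h" using s by (auto simp: in_keys_iff)
  then have "prod_encode s \<le> k" using f h s by blast
  moreover have "s \<noteq> s0" using s lookup[of s0] s0(1) unfolding c_def by (auto simp: in_keys_iff)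
  then have "prod_encode s \<noteq> k" using s0(2) prod_encode_eq by metis
  ultimately show "prod_encode s < k" by simp
qed

lemma lead_reduce:
  assumes S0: "(0::nat \<times> nat) \<in> S"
    and I1: "is_ideal_in (semigroup_ring S) (J1 :: 'k::field poly2 set)"
    and lead: "lead_codes M J2 \<subseteq> lead_codes M J1"
    and f: "f \<in> J2" "s0 \<in> Poly_Mapping.keys f \<inter> M"
      "\<forall>s\<in>Poly_Mapping.keys f \<inter> M. prod_encode s \<le> prod_encode s0"
  obtains g where "g \<in> J1" "\<forall>s\<in>Poly_Mapping.keys (f - g) \<inter> M. prod_encode s < prod_encode s0"
proof -
  have "prod_encode s0 = Max (prod_encode ` (Poly_Mapping.keys f \<inter> M))"
    using f(2,3) by (intro Max_eqI[symmetric]) auto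
  then have "prod_encode s0 \<in> lead_codes M J2"
    unfolding lead_codes_def using f(1,2) by (intro CollectI exI[of _ f]) auto
  then obtain h where h: "h \<in> J1" "Poly_Mapping.keys h \<inter> M \<noteq> {}"
      "prod_encode s0 = Max (prod_encode ` (Poly_Mapping.keys h \<inter> M))"
    using lead unfolding lead_codes_def by blast
  have fin_h: "finite (prod_encode ` (Poly_Mapping.keys h \<inter> M))" by simp
  have h_le: "\<forall>s\<in>Poly_Mapping.keys h \<inter> M. prod_encode s \<le> prod_encode s0"
    using Max_ge[OF fin_h] h(3) by simp
  have "prod_encode s0 \<in> prod_encode ` (Poly_Mapping.keys h \<inter> M)"
    using Max_in[OF fin_h] h(2,3) by auto
  then have "s0 \<in> Poly_Mapping.keys h" using prod_encode_eq by auto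
  define g where "g = Poly_Mapping.single 0 (Poly_Mapping.lookup f s0 / Poly_Mapping.lookup h s0) * h"
  have "\<forall>s\<in>Poly_Mapping.keys (f - g) \<inter> M. prod_encode s < prod_encode s0"
    unfolding g_def by (rule lead_cancel[OF f(3) h_le \<open>s0 \<in> Poly_Mapping.keys h\<close> refl])
  moreover have "g \<in> J1" unfolding g_def by (rule is_ideal_in_single_0_mult[OF S0 I1 h(1)])
  ultimately show ?thesis using that by blast
qed

text \<open>Reduce an element of \<open>J2\<close> by elements of \<open>J1\<close> with the same leading exponent.\<close>
lemma ideal_subset_if_lead_codes_subset:
  assumes S0: "(0::nat \<times> nat) \<in> S"
    and I1: "is_ideal_in (semigroup_ring S) (J1 :: 'k::field poly2 set)"
    and I2: "is_ideal_in (semigroup_ring S) J2"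
    and sub: "monomial_span E \<subseteq> J1" "J1 \<subseteq> J2"
    and lead: "lead_codes (S - E) J2 \<subseteq> lead_codes (S - E) J1"
  shows "J2 \<subseteq> J1"
proof -
  let ?M = "S - E"
  have bounded: "\<forall>f\<in>J2. (\<forall>s\<in>Poly_Mapping.keys f \<inter> ?M. prod_encode s < k) \<longrightarrow> f \<in> J1" for k
  proof (induction k)
    case 0
    have "f \<in> J1" if "f \<in> J2" "Poly_Mapping.keys f \<inter> ?M = {}" for f
    proof -
      have "f \<in> semigroup_ring S" using I2 that(1) unfolding is_ideal_in_def by auto
      then have "f \<in> monomial_span E" using that(2) unfolding semigroup_ring_def monomial_span_def by auto
      then show ?thesis using sub by auto
    qed
    then show ?case by blast
  next
    case (Suc k)
    show ?case
    proof (intro ballI impI)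
      fix f assume f: "f \<in> J2" "\<forall>s\<in>Poly_Mapping.keys f \<inter> ?M. prod_encode s < Suc k"
      show "f \<in> J1"
      proof (cases "\<forall>s\<in>Poly_Mapping.keys f \<inter> ?M. prod_encode s < k")
        case True
        then show ?thesis using Suc.IH f by blast
      next
        case False
        then obtain s0 where s0: "s0 \<in> Poly_Mapping.keys f \<inter> ?M" "prod_encode s0 = k"
          using f(2) by force
        have "\<forall>s\<in>Poly_Mapping.keys f \<inter> ?M. prod_encode s \<le> prod_encode s0"
          using f(2) s0(2) by (simp add: less_Suc_eq_le)
        then obtain g where g: "g \<in> J1" "\<forall>s\<in>Poly_Mapping.keys (f - g) \<inter> ?M. prod_encode s < k"
          using lead_reduce[OF S0 I1 lead f(1) s0(1)] s0(2) by metis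
        have "f - g \<in> J2" using is_ideal_in_diff[OF S0 I2 f(1)] g(1) sub(2) by blast
        then have "(f - g) + g \<in> J1" using Suc.IH g I1 unfolding is_ideal_in_def by blast
        then show "f \<in> J1" by simp
      qed
    qed
  qed
  show ?thesis
  proof
    fix f assume "f \<in> J2"
    moreover have "\<forall>s\<in>Poly_Mapping.keys f \<inter> ?M.
        prod_encode s < Suc (Max (prod_encode ` Poly_Mapping.keys f))"
      by (auto simp: le_imp_less_Suc)
    ultimately show "f \<in> J1" using bounded by blast
  qed
qed

lemma chain_length_le_lead_codes:
  assumes S0: "(0::nat \<times> nat) \<in> S" and fin: "finite (S - E)"
  shows "sorted_wrt (\<subset>) Js \<Longrightarrow> Js \<noteq> [] \<Longrightarrow>
    (\<forall>J\<in>set Js. is_ideal_in (semigroup_ring S) J \<and> (monomial_span E :: 'k::field poly2 set) \<subseteq> J) \<Longrightarrow>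
    length Js - 1 + card (lead_codes (S - E) (hd Js)) \<le> card (lead_codes (S - E) (last Js))"
proof (induction Js)
  case (Cons J Js)
  show ?case
  proof (cases "Js = []")
    case False
    have IH: "length Js - 1 + card (lead_codes (S - E) (hd Js)) \<le> card (lead_codes (S - E) (last Js))"
      using Cons False by auto
    have J: "J \<subset> hd Js" using Cons.prems(1) False by (cases Js) auto
    have "is_ideal_in (semigroup_ring S) J" "is_ideal_in (semigroup_ring S) (hd Js)"
      "monomial_span E \<subseteq> J"
      using Cons.prems(3) False by auto
    then have "lead_codes (S - E) J \<noteq> lead_codes (S - E) (hd Js)"
      using ideal_subset_if_lead_codes_subset[OF S0, of J "hd Js" E] J by blast
    then have "lead_codes (S - E) J \<subset> lead_codes (S - E) (hd Js)"
      using lead_codes_mono[of J "hd Js"] J by blast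
    moreover have "finite (lead_codes (S - E) (hd Js))"
      using finite_subset[OF lead_codes_subset finite_imageI[OF fin]] .
    ultimately have "card (lead_codes (S - E) J) < card (lead_codes (S - E) (hd Js))"
      by (rule psubset_card_mono[rotated])
    then show ?thesis using IH False by simp
  qed simp
qed simp

theorem quot_length_monomial_span:
  assumes S: "add_submonoid S" and E: "semigroup_ideal S E" "finite (S - E)"
  shows "quot_length (semigroup_ring S) (monomial_span E :: 'k::field poly2 set) = enat (card (S - E))"
proof -
  define X where "X = {enat (length Js - 1) | Js. Js \<noteq> [] \<and> hd Js = (monomial_span E :: 'k poly2 set)
      \<and> last Js = semigroup_ring S \<and> (\<forall>J\<in>set Js. is_ideal_in (semigroup_ring S) J) \<and> sorted_wrt (\<subset>) Js}"
  have S0: "(0::nat \<times> nat) \<in> S" using S unfolding add_submonoid_def by simp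
  have "x \<le> enat (card (S - E))" if "x \<in> X" for x
  proof -
    obtain Js where Js: "x = enat (length Js - 1)" "Js \<noteq> []" "hd Js = (monomial_span E :: 'k poly2 set)"
      "\<forall>J\<in>set Js. is_ideal_in (semigroup_ring S) J" "sorted_wrt (\<subset>) Js"
      using \<open>x \<in> X\<close> unfolding X_def by blast
    have "\<forall>J\<in>set Js. is_ideal_in (semigroup_ring S) J \<and> (monomial_span E :: 'k poly2 set) \<subseteq> J"
      using hd_subset_of_sorted[OF Js(5)] Js(3,4) by auto
    then have "length Js - 1 \<le> card (lead_codes (S - E) (last Js))"
      using chain_length_le_lead_codes[OF S0 E(2) Js(5,2)] by linarith
    also have "\<dots> \<le> card (prod_encode ` (S - E))"
      using lead_codes_subset E(2) by (intro card_mono) auto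
    also have "\<dots> \<le> card (S - E)" by (rule card_image_le[OF E(2)])
    finally show ?thesis using Js(1) by simp
  qed
  then have "Sup X \<le> enat (card (S - E))" by (rule Sup_least)
  moreover obtain Js where "Js \<noteq> []" "hd Js = (monomial_span E :: 'k poly2 set)"
      "last Js = semigroup_ring S" "\<forall>J\<in>set Js. is_ideal_in (semigroup_ring S) J"
      "sorted_wrt (\<subset>) Js" "length Js = card (S - E) + 1"
    using monomial_span_chain[OF S E] by blast
  then have "enat (card (S - E)) \<in> X" unfolding X_def by (intro CollectI exI[of _ Js]) simp
  then have "enat (card (S - E)) \<le> Sup X" by (rule Sup_upper)
  ultimately show ?thesis unfolding quot_length_def X_def[symmetric] by (rule antisym)
qed

section \<open>Frobenius powers of the maximal ideal\<close>

lemma zero_in_semigroup_gen: "(0::nat \<times> nat) \<in> semigroup_gen G"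
  using semigroup_gen.zero by (simp add: zero_prod_def)

lemma semigroup_gen_add: "s \<in> semigroup_gen G \<Longrightarrow> t \<in> semigroup_gen G \<Longrightarrow> s + t \<in> semigroup_gen G"
proof (induction s rule: semigroup_gen.induct)
  case zero
  then show ?case by (metis add_0 zero_prod_def)
next
  case (add g s)
  then show ?case using semigroup_gen.add[OF add.hyps(1) add.IH[OF add.prems]] by (simp add: add.assoc)
qed

lemma add_submonoid_semigroup_gen: "add_submonoid (semigroup_gen G)"
  unfolding add_submonoid_def using zero_in_semigroup_gen semigroup_gen_add by blast

definition pair_scale :: "nat \<Rightarrow> nat \<times> nat \<Rightarrow> nat \<times> nat" where
  "pair_scale n g = (n * fst g, n * snd g)"

lemma pair_scale_Suc: "pair_scale (Suc n) g = g + pair_scale n g"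
  by (simp add: pair_scale_def prod_eq_iff)

lemma pair_scale_in_semigroup_gen: "g \<in> G \<Longrightarrow> pair_scale n g \<in> semigroup_gen G"
proof (induction n)
  case 0
  then show ?case using semigroup_gen.zero by (simp add: pair_scale_def)
next
  case (Suc n)
  then show ?case using semigroup_gen.add[OF Suc.prems Suc.IH[OF Suc.prems]] by (simp only: pair_scale_Suc)
qed

lemma monom2_power: "(monom2 g :: 'k::field poly2) ^ n = Poly_Mapping.single (pair_scale n g) 1"
proof (induction n)
  case 0
  then show ?case by (simp add: pair_scale_def zero_prod_def[symmetric])
next
  case (Suc n)
  then show ?case by (simp only: pair_scale_Suc power_Suc monom2_def mult_single) simp
qed

text \<open>Exponents of the monomials in \<open>m^[n]\<close>.\<close>

definition frobenius_exps :: "(nat \<times> nat) set \<Rightarrow> nat \<Rightarrow> (nat \<times> nat) set" where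
  "frobenius_exps G n = {s. \<exists>g\<in>G. \<exists>t\<in>semigroup_gen G. s = pair_scale n g + t}"

lemma semigroup_ideal_frobenius_exps: "semigroup_ideal (semigroup_gen G) (frobenius_exps G n)"
  unfolding semigroup_ideal_def
proof (intro conjI ballI)
  show "frobenius_exps G n \<subseteq> semigroup_gen G"
    unfolding frobenius_exps_def using pair_scale_in_semigroup_gen semigroup_gen_add by blast
  fix s t assume s: "s \<in> frobenius_exps G n" and t: "t \<in> semigroup_gen G"
  then obtain g u where gu: "g \<in> G" "u \<in> semigroup_gen G" "s = pair_scale n g + u"
    unfolding frobenius_exps_def by blast
  then have "s + t = pair_scale n g + (u + t)" by (simp add: add.assoc)
  moreover have "u + t \<in> semigroup_gen G" using semigroup_gen_add gu(2) t by blast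
  ultimately show "s + t \<in> frobenius_exps G n" unfolding frobenius_exps_def using gu(1) by blast
qed

lemma poly_mapping_sum_single:
  "f = (\<Sum>s\<in>Poly_Mapping.keys f. Poly_Mapping.single s (Poly_Mapping.lookup f s))"
proof (rule poly_mapping_eqI)
  fix k
  show "Poly_Mapping.lookup f k = Poly_Mapping.lookup
      (\<Sum>s\<in>Poly_Mapping.keys f. Poly_Mapping.single s (Poly_Mapping.lookup f s)) k"
    unfolding lookup_sum
    by (cases "k \<in> Poly_Mapping.keys f") (simp_all add: lookup_single when_def in_keys_iff)
qed

lemma gen_ideal_subset_monomial_span:
  "gen_ideal (semigroup_ring (semigroup_gen G)) G (\<lambda>g. (monom2 g :: 'k::field poly2) ^ n)
     \<subseteq> monomial_span (frobenius_exps G n)"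
proof
  fix f assume "f \<in> gen_ideal (semigroup_ring (semigroup_gen G)) G (\<lambda>g. (monom2 g :: 'k poly2) ^ n)"
  then obtain c where c: "f = (\<Sum>g\<in>G. c g * monom2 g ^ n)" "\<forall>g\<in>G. c g \<in> semigroup_ring (semigroup_gen G)"
    unfolding gen_ideal_def by blast
  have "Poly_Mapping.keys (c g * monom2 g ^ n) \<subseteq> frobenius_exps G n" if g: "g \<in> G" for g
  proof
    fix k assume "k \<in> Poly_Mapping.keys (c g * monom2 g ^ n)"
    have "Poly_Mapping.keys (Poly_Mapping.single (pair_scale n g) (1::'k)) = {pair_scale n g}" by simp
    then have "k \<in> {a + b | a b. a \<in> Poly_Mapping.keys (c g) \<and> b \<in> {pair_scale n g}}"
      using keys_mult[of "c g" "Poly_Mapping.single (pair_scale n g) (1::'k)"] \<open>k \<in> _\<close>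
      unfolding monom2_power by blast
    then obtain u where "u \<in> Poly_Mapping.keys (c g)" "k = u + pair_scale n g" by blast
    then show "k \<in> frobenius_exps G n" using c(2) g unfolding frobenius_exps_def semigroup_ring_def
      by (auto simp: add.commute)
  qed
  then have "Poly_Mapping.keys f \<subseteq> frobenius_exps G n" unfolding c(1) using keys_sum by fast
  then show "f \<in> monomial_span (frobenius_exps G n)" unfolding monomial_span_def by simp
qed

text \<open>Group the monomials of \<open>f\<close> according to a generator \<open>g\<close> with \<open>s \<in> n g + S\<close>.\<close>

lemma monomial_span_subset_gen_ideal:
  assumes "finite G"
  shows "monomial_span (frobenius_exps G n)
     \<subseteq> gen_ideal (semigroup_ring (semigroup_gen G)) G (\<lambda>g. (monom2 g :: 'k::field poly2) ^ n)"
proof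
  fix f :: "'k poly2" assume "f \<in> monomial_span (frobenius_exps G n)"
  then have "\<forall>s\<in>Poly_Mapping.keys f. \<exists>g t. g \<in> G \<and> t \<in> semigroup_gen G \<and> s = pair_scale n g + t"
    unfolding monomial_span_def frobenius_exps_def by blast
  then obtain gs ts where gt: "\<And>s. s \<in> Poly_Mapping.keys f \<Longrightarrow>
      gs s \<in> G \<and> ts s \<in> semigroup_gen G \<and> s = pair_scale n (gs s) + ts s"
    by metis
  define c where "c g = (\<Sum>s | s \<in> Poly_Mapping.keys f \<and> gs s = g.
    Poly_Mapping.single (ts s) (Poly_Mapping.lookup f s))" for g
  have "Poly_Mapping.keys (c g) \<subseteq> semigroup_gen G" for g
    unfolding c_def using keys_sum[of _ "{s \<in> Poly_Mapping.keys f. gs s = g}"] gt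
    by (force split: if_splits)
  then have c: "c g \<in> semigroup_ring (semigroup_gen G)" for g unfolding semigroup_ring_def by simp
  have cg: "c g * monom2 g ^ n = (\<Sum>s | s \<in> Poly_Mapping.keys f \<and> gs s = g.
      Poly_Mapping.single s (Poly_Mapping.lookup f s))" for g
    unfolding c_def monom2_power sum_distrib_right
    by (rule sum.cong) (use gt in \<open>auto simp: mult_single add.commute\<close>)
  have "(\<Sum>g\<in>G. c g * monom2 g ^ n)
      = (\<Sum>s\<in>Poly_Mapping.keys f. Poly_Mapping.single s (Poly_Mapping.lookup f s))"
    unfolding cg by (rule sum.group) (use assms gt in auto)
  also have "\<dots> = f" by (rule poly_mapping_sum_single[symmetric])
  finally show "f \<in> gen_ideal (semigroup_ring (semigroup_gen G)) G (\<lambda>g. (monom2 g :: 'k poly2) ^ n)"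
    unfolding gen_ideal_def using c by blast
qed

theorem hk_length_eq_card:
  assumes "finite G" "finite (semigroup_gen G - frobenius_exps G n)"
  shows "hk_length TYPE('k::field) G n = enat (card (semigroup_gen G - frobenius_exps G n))"
proof -
  have "gen_ideal (semigroup_ring (semigroup_gen G)) G (\<lambda>g. (monom2 g :: 'k poly2) ^ n)
      = monomial_span (frobenius_exps G n)"
    using gen_ideal_subset_monomial_span monomial_span_subset_gen_ideal[OF assms(1)] by blast
  then show ?thesis
    unfolding hk_length_def
    using quot_length_monomial_span[OF add_submonoid_semigroup_gen semigroup_ideal_frobenius_exps assms(2)]
    by simp
qed

lemma has_ehk_if_tendsto:
  assumes "\<And>n. hk_length TYPE('k::field) G n = enat (f n)"
    and lim: "(\<lambda>n. real (f n) / real n ^ 2) \<longlonglongrightarrow> e"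
  shows "has_ehk TYPE('k) G e"
proof (cases "CHAR('k) = 0")
  case False
  then have "CHAR('k) \<ge> 2" using CHAR_not_1 by (metis One_nat_def less_2_cases not_le)
  then have "strict_mono (\<lambda>j. CHAR('k) ^ j)" by (intro strict_monoI power_strict_increasing) auto
  from LIMSEQ_subseq_LIMSEQ[OF lim this] show ?thesis
    unfolding has_ehk_def assms(1) using False by (simp add: o_def)
qed (use assms in \<open>simp add: has_ehk_def\<close>)

section \<open>Lattice points in triangles\<close>

text \<open>The number of lattice points \<open>(m, y)\<close> with \<open>m < B\<close> and \<open>y + m N < X\<close>: a triangle of
  area \<open>X\<^sup>2 / (2 N)\<close> once \<open>B N \<ge> X\<close>.\<close>

definition tri_count :: "nat \<Rightarrow> nat \<Rightarrow> nat \<Rightarrow> nat" where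
  "tri_count N X B = (\<Sum>m<B. X - m * N)"

lemma tri_count_Suc: "tri_count N X (Suc B) = tri_count N X B + (X - B * N)"
  unfolding tri_count_def by simp

lemma tri_count_stable:
  assumes "X \<le> B * N" "B \<le> B'"
  shows "tri_count N X B' = tri_count N X B"
  using assms(2)
proof (induction B' rule: dec_induct)
  case (step k)
  have "B * N \<le> k * N" using step.hyps(1) by (rule mult_le_mono1)
  then have "X - k * N = 0" using assms(1) by linarith
  then show ?case using step.IH by (simp add: tri_count_Suc)
qed simp

lemma tri_count_mono:
  assumes "B \<le> B'"
  shows "tri_count N X B \<le> tri_count N X B'"
  using assms by (induction B' rule: dec_induct) (auto simp: tri_count_Suc)

lemma tri_count_shift: "tri_count N (X + N) (Suc B) = (X + N) + tri_count N X B"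
proof -
  have "tri_count N (X + N) (Suc B) = (X + N - 0 * N) + (\<Sum>m<B. X + N - Suc m * N)"
    unfolding tri_count_def by (rule sum.lessThan_Suc_shift)
  also have "(\<Sum>m<B. X + N - Suc m * N) = tri_count N X B" unfolding tri_count_def by simp
  finally show ?thesis by simp
qed

lemma tri_count_eq_full:
  assumes "N \<ge> 1" "X \<le> B * N"
  shows "tri_count N X B = tri_count N X X"
proof (cases "B \<le> X")
  case True
  from tri_count_stable[OF assms(2) True] show ?thesis by simp
next
  case False
  have "X \<le> X * N" using assms(1) by simp
  from tri_count_stable[OF this, of B] False show ?thesis by simp
qed

lemma tri_count_le_full:
  assumes "N \<ge> 1"
  shows "tri_count N X B \<le> tri_count N X X"
proof (cases "B \<le> X")
  case True
  then show ?thesis by (rule tri_count_mono)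
next
  case False
  then have "X \<le> B" by simp
  also have "B \<le> B * N" using assms by simp
  finally have "X \<le> B * N" .
  from tri_count_eq_full[OF assms this] show ?thesis by simp
qed

lemma tri_count_full_bounds:
  assumes "N \<ge> 1"
  shows "X * X \<le> 2 * N * tri_count N X X \<and> 2 * N * tri_count N X X \<le> X * X + 2 * N * X"
proof (induction X rule: less_induct)
  case (less X)
  show ?case
  proof (cases "X < N")
    case True
    then have "X \<le> 1 * N" by simp
    from tri_count_eq_full[OF assms this] have "tri_count N X X = tri_count N X 1" by simp
    also have "\<dots> = X" by (simp add: tri_count_def)
    finally have "tri_count N X X = X" .
    moreover have "X * X \<le> N * X" using True by simp
    moreover have "N * X \<le> 2 * N * X" by simp
    ultimately show ?thesis by (metis le_add2 le_trans)
  next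
    case False
    define Y where "Y = X - N"
    have XY: "X = Y + N" using False Y_def by simp
    have "X \<le> Suc Y * N" using assms XY by simp
    from tri_count_eq_full[OF assms this] have "tri_count N X X = tri_count N X (Suc Y)" by simp
    then have "tri_count N X X = X + tri_count N Y Y" using tri_count_shift[of N Y Y] XY by simp
    then have "2 * N * tri_count N X X = 2 * N * Y + 2 * N * N + 2 * N * tri_count N Y Y"
      unfolding XY by (simp add: algebra_simps)
    moreover have "Y * Y \<le> 2 * N * tri_count N Y Y" "2 * N * tri_count N Y Y \<le> Y * Y + 2 * N * Y"
      using less[of Y] assms XY by auto
    moreover have "X * X = Y * Y + 2 * N * Y + N * N" "2 * N * X = 2 * N * Y + 2 * N * N"
      unfolding XY by (simp_all add: algebra_simps)
    ultimately show ?thesis by linarith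
  qed
qed

lemma tri_count_lower:
  assumes "N \<ge> 1" "X \<le> B * N"
  shows "real X ^ 2 / (2 * real N) \<le> real (tri_count N X B)"
proof -
  have "X * X \<le> 2 * N * tri_count N X B"
    using tri_count_full_bounds[OF assms(1), of X] tri_count_eq_full[OF assms] by simp
  then have "real (X * X) \<le> real (2 * N * tri_count N X B)" by (simp only: of_nat_le_iff)
  then have "real X ^ 2 \<le> 2 * real N * real (tri_count N X B)" by (simp add: power2_eq_square)
  then show ?thesis using assms(1) by (simp add: field_simps)
qed

lemma tri_count_upper:
  assumes "N \<ge> 1"
  shows "real (tri_count N X B) \<le> real X ^ 2 / (2 * real N) + real X"
proof -
  have "2 * N * tri_count N X B \<le> 2 * N * tri_count N X X"
    using tri_count_le_full[OF assms, of X B] by simp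
  then have "2 * N * tri_count N X B \<le> X * X + 2 * N * X"
    using tri_count_full_bounds[OF assms, of X] by linarith
  then have "real (2 * N * tri_count N X B) \<le> real (X * X + 2 * N * X)" by (simp only: of_nat_le_iff)
  then have "2 * real N * real (tri_count N X B) \<le> real X ^ 2 + 2 * real N * real X"
    by (simp add: power2_eq_square)
  then show ?thesis using assms by (simp add: field_simps)
qed

lemma sum_lessThan_real: "(\<Sum>d<n. real d) = real n * (real n - 1) / 2"
  by (induction n) (auto simp: algebra_simps)

lemma exists_step_crossing:
  fixes f :: "nat \<Rightarrow> nat"
  shows "f 0 \<le> x \<Longrightarrow> x < f p \<Longrightarrow> \<exists>r. 1 \<le> r \<and> r \<le> p \<and> f (r - 1) \<le> x \<and> x < f r"
proof (induction p)
  case (Suc p)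
  show ?case
  proof (cases "x < f p")
    case True
    then show ?thesis using Suc by (metis le_SucI)
  next
    case False
    then show ?thesis using Suc.prems by (intro exI[of _ "Suc p"]) simp
  qed
qed simp

lemma tendsto_div_square_of_bounds:
  fixes f :: "nat \<Rightarrow> real"
  assumes lower: "\<forall>\<^sub>F n in sequentially. e * real n ^ 2 - C1 * real n - C0 \<le> f n"
    and upper: "\<forall>\<^sub>F n in sequentially. f n \<le> e * real n ^ 2 + D1 * real n + D0"
  shows "(\<lambda>n. f n / real n ^ 2) \<longlonglongrightarrow> e"
proof (rule tendsto_sandwich)
  have inv: "(\<lambda>n. K / real n) \<longlonglongrightarrow> 0" "(\<lambda>n. K / real n ^ 2) \<longlonglongrightarrow> 0" for K :: real
    by real_asymp+
  show "(\<lambda>n. e - C1 / real n - C0 / real n ^ 2) \<longlonglongrightarrow> e"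
    using tendsto_diff[OF tendsto_diff[OF tendsto_const inv(1)] inv(2)] by simp
  show "(\<lambda>n. e + D1 / real n + D0 / real n ^ 2) \<longlonglongrightarrow> e"
    using tendsto_add[OF tendsto_add[OF tendsto_const inv(1)] inv(2)] by simp
  show "\<forall>\<^sub>F n in sequentially. e - C1 / real n - C0 / real n ^ 2 \<le> f n / real n ^ 2"
    using lower eventually_gt_at_top[of 0]
  proof eventually_elim
    case (elim n)
    have "(e * real n ^ 2 - C1 * real n - C0) / real n ^ 2 \<le> f n / real n ^ 2"
      using elim(1) by (rule divide_right_mono) simp
    moreover have "(e * real n ^ 2 - C1 * real n - C0) / real n ^ 2 = e - C1 / real n - C0 / real n ^ 2"
      using elim(2) by (simp add: field_simps power2_eq_square)
    ultimately show ?case by simp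
  qed
  show "\<forall>\<^sub>F n in sequentially. f n / real n ^ 2 \<le> e + D1 / real n + D0 / real n ^ 2"
    using upper eventually_gt_at_top[of 0]
  proof eventually_elim
    case (elim n)
    have "f n / real n ^ 2 \<le> (e * real n ^ 2 + D1 * real n + D0) / real n ^ 2"
      using elim(1) by (rule divide_right_mono) simp
    moreover have "(e * real n ^ 2 + D1 * real n + D0) / real n ^ 2 = e + D1 / real n + D0 / real n ^ 2"
      using elim(2) by (simp add: field_simps power2_eq_square)
    ultimately show ?case by simp
  qed
qed

section \<open>The semigroup generated by \<open>(n\<^sub>r, n\<^sub>p - n\<^sub>r)\<close>\<close>

locale hk_semigroup =
  fixes a :: "nat \<Rightarrow> nat" and p :: nat
  assumes a_strict_mono: "\<And>i j. i < j \<Longrightarrow> j \<le> p \<Longrightarrow> a i < a j"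
    and a_0: "a 0 = 0" and p_pos: "1 \<le> p"
begin

abbreviation "N \<equiv> a p"

abbreviation "A \<equiv> a ` {..p}"

abbreviation "G \<equiv> {(a r, N - a r) | r. r \<le> p}"

lemma a_mono: "i \<le> j \<Longrightarrow> j \<le> p \<Longrightarrow> a i \<le> a j"
  using a_strict_mono by (metis le_eq_less_or_eq)

lemma N_pos: "1 \<le> N"
  using a_strict_mono[of 0 p] a_0 p_pos by simp

lemma A_subset: "A \<subseteq> {..N}"
  using a_mono by auto

lemma zero_in_A: "0 \<in> A"
  using a_0 by force

lemma N_in_A: "N \<in> A"
  by auto

lemma finite_G: "finite G"
proof -
  have "G = (\<lambda>r. (a r, N - a r)) ` {..p}" by auto
  then show ?thesis by simp
qed

lemma semigroup_gen_degree: "s \<in> semigroup_gen G \<Longrightarrow> \<exists>d. fst s + snd s = d * N \<and> fst s \<in> sumset A d"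
proof (induction s rule: semigroup_gen.induct)
  case zero
  then show ?case by (intro exI[of _ 0]) simp
next
  case (add g s)
  then obtain r where r: "r \<le> p" "g = (a r, N - a r)" by blast
  obtain d where d: "fst s + snd s = d * N" "fst s \<in> sumset A d" using add.IH by blast
  have "a r \<le> N" using a_mono r(1) by simp
  then have "fst (g + s) + snd (g + s) = Suc d * N" using r d by simp
  moreover have "a r + fst s \<in> sumset A (Suc d)" using d(2) r(1) by auto
  ultimately show ?case using r(2) by (metis fst_conv fst_add)
qed

lemma pair_in_semigroup_gen: "x \<in> sumset A d \<Longrightarrow> (x, d * N - x) \<in> semigroup_gen G"
proof (induction d arbitrary: x)
  case 0
  then show ?case using semigroup_gen.zero by simp
next
  case (Suc d)
  then obtain r z where rz: "r \<le> p" "z \<in> sumset A d" "x = a r + z" by auto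
  have "z \<le> d * N" using sumset_le[OF A_subset rz(2)] .
  moreover have "a r \<le> N" using a_mono rz(1) by simp
  ultimately have "Suc d * N - x = (N - a r) + (d * N - z)" using rz(3) by simp
  then have eq: "(x, Suc d * N - x) = (a r, N - a r) + (z, d * N - z)" using rz(3) by simp
  have "(a r, N - a r) \<in> G" using rz(1) by blast
  from semigroup_gen.add[OF this Suc.IH[OF rz(2)]] show ?case by (simp only: eq)
qed

lemma semigroup_gen_iff: "(x, y) \<in> semigroup_gen G \<longleftrightarrow> (\<exists>d. x + y = d * N \<and> x \<in> sumset A d)"
proof
  assume "\<exists>d. x + y = d * N \<and> x \<in> sumset A d"
  then obtain d where "y = d * N - x" "x \<in> sumset A d" by (metis add_diff_cancel_left')
  then show "(x, y) \<in> semigroup_gen G" using pair_in_semigroup_gen by simp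
qed (use semigroup_gen_degree[of "(x, y)"] in simp)

text \<open>\<open>frob_covered n d x\<close> says that the point \<open>(x, d N - x)\<close> of \<open>S\<close> lies in \<open>n g\<^sub>r + S\<close>
  for a generator \<open>g\<^sub>r = (a r, N - a r)\<close>.\<close>

definition frob_covered :: "nat \<Rightarrow> nat \<Rightarrow> nat \<Rightarrow> bool" where
  "frob_covered n d x \<longleftrightarrow> n \<le> d \<and> (\<exists>r\<le>p. n * a r \<le> x \<and> x - n * a r \<in> sumset A (d - n))"

lemma frob_covered_if_in_frobenius_exps:
  assumes x: "x \<in> sumset A d" and E: "(x, d * N - x) \<in> frobenius_exps G n"
  shows "frob_covered n d x"
proof -
  obtain g t where gt: "g \<in> G" "t \<in> semigroup_gen G" "(x, d * N - x) = pair_scale n g + t"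
    using E unfolding frobenius_exps_def by blast
  obtain r where r: "r \<le> p" "g = (a r, N - a r)" using gt(1) by blast
  obtain d' where d': "fst t + snd t = d' * N" "fst t \<in> sumset A d'"
    using semigroup_gen_degree[OF gt(2)] by blast
  have "x = fst (pair_scale n g + t)" "d * N - x = snd (pair_scale n g + t)"
    using gt(3) by (metis fst_conv, metis snd_conv)
  then have e1: "x = n * a r + fst t" and e2: "d * N - x = n * (N - a r) + snd t"
    using r(2) by (simp_all add: pair_scale_def)
  have "n * (N - a r) = n * N - n * a r" by (simp add: diff_mult_distrib2)
  moreover have "n * a r \<le> n * N" using a_mono r(1) by simp
  moreover have "x \<le> d * N" using sumset_le[OF A_subset x] .
  ultimately have "d * N = n * N + d' * N" using e1 e2 d'(1) by linarith
  then have "d = n + d'" using N_pos by (metis add_mult_distrib mult_cancel_right not_one_le_zero)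
  then have "n \<le> d" "n * a r \<le> x" "x - n * a r \<in> sumset A (d - n)" using e1 d'(2) by simp_all
  then show ?thesis unfolding frob_covered_def using r(1) by blast
qed

lemma in_frobenius_exps_if_frob_covered:
  assumes "frob_covered n d x"
  shows "(x, d * N - x) \<in> frobenius_exps G n"
proof -
  obtain r where r: "n \<le> d" "r \<le> p" "n * a r \<le> x" "x - n * a r \<in> sumset A (d - n)"
    using assms unfolding frob_covered_def by blast
  define t where "t = (x - n * a r, (d - n) * N - (x - n * a r))"
  have t: "t \<in> semigroup_gen G" unfolding t_def by (rule pair_in_semigroup_gen[OF r(4)])
  have "x - n * a r \<le> (d - n) * N" using sumset_le[OF A_subset r(4)] .
  moreover have "d * N = n * N + (d - n) * N" using r(1) by (metis add_mult_distrib le_add_diff_inverse)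
  moreover have "n * N = n * a r + n * (N - a r)"
    using a_mono[OF r(2) order_refl] by (metis add_mult_distrib2 le_add_diff_inverse)
  ultimately have "n * (N - a r) + ((d - n) * N - (x - n * a r)) = d * N - x" using r(3) by linarith
  moreover have "n * a r + (x - n * a r) = x" using r(3) by simp
  ultimately have "(x, d * N - x) = pair_scale n (a r, N - a r) + t"
    unfolding t_def pair_scale_def by (simp only: fst_conv snd_conv plus_prod_def)
  moreover have "(a r, N - a r) \<in> G" using r(2) by blast
  ultimately show ?thesis unfolding frobenius_exps_def using t by blast
qed

definition hk_points :: "nat \<Rightarrow> (nat \<times> nat) set" where
  "hk_points n = {(d, x). x \<in> sumset A d \<and> \<not> frob_covered n d x}"

lemma bij_betw_hk_points:
  "bij_betw (\<lambda>(d, x). (x, d * N - x)) (hk_points n) (semigroup_gen G - frobenius_exps G n)"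
proof (rule bij_betw_imageI)
  show "inj_on (\<lambda>(d, x). (x, d * N - x)) (hk_points n)"
  proof (rule inj_onI, clarsimp)
    fix d x d' assume "(d, x) \<in> hk_points n" "(d', x) \<in> hk_points n" "d * N - x = d' * N - x"
    moreover have "x \<le> d * N" "x \<le> d' * N"
      using calculation(1,2) sumset_le[OF A_subset] unfolding hk_points_def by auto
    ultimately have "d * N = d' * N" by linarith
    then show "d = d'" using N_pos by simp
  qed
  show "(\<lambda>(d, x). (x, d * N - x)) ` hk_points n = semigroup_gen G - frobenius_exps G n"
  proof (intro equalityI subsetI)
    fix w assume "w \<in> (\<lambda>(d, x). (x, d * N - x)) ` hk_points n"
    then obtain d x where "x \<in> sumset A d" "\<not> frob_covered n d x" "w = (x, d * N - x)"
      unfolding hk_points_def by auto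
    then show "w \<in> semigroup_gen G - frobenius_exps G n"
      using frob_covered_if_in_frobenius_exps pair_in_semigroup_gen by blast
  next
    fix w assume w: "w \<in> semigroup_gen G - frobenius_exps G n"
    obtain x y where xy: "w = (x, y)" by (cases w)
    then obtain d where d: "x + y = d * N" "x \<in> sumset A d" using w semigroup_gen_iff by blast
    have "w = (x, d * N - x)" using xy d(1) by simp
    moreover from this have "(d, x) \<in> hk_points n"
      using w d(2) in_frobenius_exps_if_frob_covered unfolding hk_points_def by auto
    ultimately show "w \<in> (\<lambda>(d, x). (x, d * N - x)) ` hk_points n" by (auto intro: rev_image_eqI)
  qed
qed

definition "gap r = a r - a (r - 1)"

definition "ehk = real N / 2 + (\<Sum>r\<in>{1..p}. real (gap r) ^ 2) / (2 * real N)"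

lemma gap_mult: "r \<le> p \<Longrightarrow> n * a r - n * a (r - 1) = n * gap r"
  unfolding gap_def by (simp add: diff_mult_distrib2)

lemma gap_pos: "1 \<le> r \<Longrightarrow> r \<le> p \<Longrightarrow> 1 \<le> gap r"
  unfolding gap_def using a_strict_mono[of "r - 1" r] by simp

lemma gap_le: "r \<le> p \<Longrightarrow> gap r \<le> N"
  unfolding gap_def using a_mono[of r p] by simp

lemma ehk_eq:
  "ehk = 1 + (1 / real N) * (\<Sum>r=1..p. (real (a r) - 1) * (real (a r) - real (a (r - 1))))"
proof -
  define f where "f r = real (a r)" for r
  have gap: "real (gap r) = f r - f (r - 1)" if "r \<in> {1..p}" for r
    unfolding f_def gap_def using a_mono[of "r - 1" r] that by (simp add: of_nat_diff)
  have tel1: "(\<Sum>r\<in>{1..p}. f r - f (r - 1)) = f p"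
    using sum_telescope''[of 0 p f] a_0 p_pos unfolding f_def by simp
  have tel2: "(\<Sum>r\<in>{1..p}. f r ^ 2 - f (r - 1) ^ 2) = f p ^ 2"
    using sum_telescope''[of 0 p "\<lambda>r. f r ^ 2"] a_0 p_pos unfolding f_def by simp
  define A B C where "A r = f r ^ 2 - f (r - 1) ^ 2" and "B r = (f r - f (r - 1)) ^ 2"
    and "C r = f r - f (r - 1)" for r
  have "(f r - 1) * (f r - f (r - 1)) = A r / 2 + B r / 2 - C r" for r
    unfolding A_def B_def C_def by (simp add: power2_eq_square field_simps)
  then have "(\<Sum>r=1..p. (f r - 1) * (f r - f (r - 1)))
      = (\<Sum>r\<in>{1..p}. A r) / 2 + (\<Sum>r\<in>{1..p}. B r) / 2 - (\<Sum>r\<in>{1..p}. C r)"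
    by (simp only: sum_subtractf sum.distrib sum_divide_distrib)
  also have "\<dots> = f p ^ 2 / 2 + (\<Sum>r\<in>{1..p}. real (gap r) ^ 2) / 2 - f p"
    unfolding A_def B_def C_def tel1 tel2 using gap by simp
  finally show ?thesis
    using N_pos unfolding ehk_def f_def by (simp add: field_simps power2_eq_square)
qed

end

section \<open>Counting the points outside the Frobenius power\<close>

locale hk_semigroup_interval = hk_semigroup +
  fixes c m0 :: nat
  assumes sumset_interval: "\<And>m y. m0 \<le> m \<Longrightarrow> c \<le> y \<Longrightarrow> y + c \<le> m * N \<Longrightarrow> y \<in> sumset A m"
begin

definition m1 :: nat where "m1 = max m0 c"

definition strip_len :: "nat \<Rightarrow> nat" where "strip_len n = n * N + 2 * c + 1"

text \<open>In degree \<open>n + m\<close> with \<open>m \<ge> m1\<close>, a point outside \<open>m^[n]\<close> has \<open>x\<close> within \<open>c\<close> of one of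
  the windows \<open>[n a (r - 1) + m N, n a r)\<close>, which are empty once \<open>m \<ge> n\<close>; below degree \<open>n\<close>
  nothing is covered. So \<open>hk_points n\<close> lies between the \<open>inside\<close> and the \<open>cover\<close> regions, and
  both are unions of triangles up to \<open>O(n)\<close> points.\<close>

definition cover_low :: "nat \<Rightarrow> (nat \<times> nat) set" where
  "cover_low n = (SIGMA d:{..<n + m1}. {..d * N})"

definition cover_strip :: "nat \<Rightarrow> nat \<Rightarrow> (nat \<times> nat) set" where
  "cover_strip n r = (\<lambda>(m, x). (n + m, x)) `
     (SIGMA m:{..<strip_len n}. {n * a (r - 1) + m * N - c ..< n * a r + c})"

definition inside_low :: "nat \<Rightarrow> (nat \<times> nat) set" where
  "inside_low n = (SIGMA d:{m1..<n}. {c ..< d * N + 1 - c})"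

definition inside_strip :: "nat \<Rightarrow> nat \<Rightarrow> (nat \<times> nat) set" where
  "inside_strip n r = (\<lambda>(m, x). (n + m, x)) `
     (SIGMA m:{..<strip_len n}. {n * a (r - 1) + m * N + c + 1 ..< n * a r - c})"

lemma uncovered_bounds:
  assumes x: "x \<in> sumset A (n + m)" and nc: "\<not> frob_covered n (n + m) x" and m: "m1 \<le> m"
  shows "c \<le> x" "x + c \<le> (n + m) * N" "x < n * N + c"
proof -
  have m0m: "m0 \<le> m" and cm: "c \<le> m" using m unfolding m1_def by auto
  have dN: "(n + m) * N = n * N + m * N" by (simp add: add_mult_distrib)
  have mmN: "m \<le> m * N" using N_pos by simp
  have cov: "False" if "r \<le> p" "n * a r \<le> x" "x - n * a r \<in> sumset A m" for r
    using nc that unfolding frob_covered_def by auto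
  show "c \<le> x"
  proof (rule ccontr)
    assume "\<not> c \<le> x"
    then have "x \<in> sumset A m" using sumset_downward[OF zero_in_A x] cm by simp
    then show False using cov[of 0] a_0 by simp
  qed
  show xc: "x + c \<le> (n + m) * N"
  proof (rule ccontr)
    assume as: "\<not> x + c \<le> (n + m) * N"
    have "(n + m) * N - x \<in> sumset (reflect N A) m"
      using sumset_downward[OF zero_in_reflect[OF N_in_A] sumset_reflect[OF A_subset x]] as cm by simp
    moreover have "n * N \<le> x" "x \<le> (n + m) * N" using as dN cm mmN sumset_le[OF A_subset x] by linarith+
    moreover have "m * N - (x - n * N) = (n + m) * N - x" using calculation(2,3) dN by linarith
    ultimately have "x - n * N \<in> sumset A m"
      using sumset_reflect_iff[OF A_subset, of "x - n * N" m] dN by simp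
    then show False using cov[of p] \<open>n * N \<le> x\<close> by simp
  qed
  show "x < n * N + c"
  proof (rule ccontr)
    assume "\<not> x < n * N + c"
    then have "x - n * N \<in> sumset A m" using xc dN by (intro sumset_interval[OF m0m]) linarith+
    then show False using cov[of p] \<open>\<not> x < n * N + c\<close> by simp
  qed
qed

lemma uncovered_in_strip:
  assumes x: "x \<in> sumset A (n + m)" and nc: "\<not> frob_covered n (n + m) x" and m: "m1 \<le> m"
  shows "\<exists>r\<in>{1..p}. (n + m, x) \<in> cover_strip n r"
proof -
  have m0m: "m0 \<le> m" using m unfolding m1_def by auto
  obtain r where r: "1 \<le> r" "r \<le> p" "n * a (r - 1) + c \<le> x" "x < n * a r + c"
    using exists_step_crossing[of "\<lambda>r. n * a r + c" x p] uncovered_bounds[OF assms] a_0 by auto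
  have "n * a (r - 1) + m * N < x + c"
  proof (rule ccontr)
    assume "\<not> n * a (r - 1) + m * N < x + c"
    then have "x - n * a (r - 1) \<in> sumset A m" using r(3) by (intro sumset_interval[OF m0m]) linarith+
    then show False using nc r unfolding frob_covered_def by auto
  qed
  moreover have "n * a r \<le> n * N" using a_mono r(2) by simp
  moreover have "m \<le> m * N" using N_pos by simp
  ultimately have "m < strip_len n" using r(4) unfolding strip_len_def by linarith
  then have "(m, x) \<in> (SIGMA m:{..<strip_len n}. {n * a (r - 1) + m * N - c ..< n * a r + c})"
    using \<open>n * a (r - 1) + m * N < x + c\<close> r(4) by auto
  then show ?thesis unfolding cover_strip_def using r(1,2) by force
qed

lemma hk_points_subset_cover: "hk_points n \<subseteq> cover_low n \<union> (\<Union>r\<in>{1..p}. cover_strip n r)"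
proof
  fix w assume "w \<in> hk_points n"
  then obtain d x where w: "w = (d, x)" "x \<in> sumset A d" "\<not> frob_covered n d x"
    unfolding hk_points_def by auto
  show "w \<in> cover_low n \<union> (\<Union>r\<in>{1..p}. cover_strip n r)"
  proof (cases "d < n + m1")
    case True
    then show ?thesis using w sumset_le[OF A_subset w(2)] unfolding cover_low_def by auto
  next
    case False
    then have "d = n + (d - n)" "m1 \<le> d - n" by auto
    then show ?thesis using uncovered_in_strip[of x n "d - n"] w by (metis UN_iff UnI2)
  qed
qed

lemma inside_subset_hk_points:
  assumes n: "m1 \<le> n"
  shows "inside_low n \<union> (\<Union>r\<in>{1..p}. inside_strip n r) \<subseteq> hk_points n"
proof
  fix w assume w: "w \<in> inside_low n \<union> (\<Union>r\<in>{1..p}. inside_strip n r)"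
  show "w \<in> hk_points n"
  proof (cases "w \<in> inside_low n")
    case True
    then obtain d x where dx: "w = (d, x)" "m1 \<le> d" "d < n" "c \<le> x" "x < d * N + 1 - c"
      unfolding inside_low_def by auto
    have "x \<in> sumset A d" using dx by (intro sumset_interval) (auto simp: m1_def)
    then show ?thesis using dx unfolding hk_points_def frob_covered_def by auto
  next
    case False
    then obtain r where r: "1 \<le> r" "r \<le> p" "w \<in> inside_strip n r" using w by auto
    then obtain m x where mx: "w = (n + m, x)" "n * a (r - 1) + m * N + c + 1 \<le> x" "x < n * a r - c"
      unfolding inside_strip_def by auto
    have "n * a r \<le> n * N" using a_mono r(2) by simp
    moreover have "(n + m) * N = n * N + m * N" by (simp add: add_mult_distrib)
    ultimately have "x + c \<le> (n + m) * N" using mx(3) by linarith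
    then have "x \<in> sumset A (n + m)" using mx n by (intro sumset_interval) (auto simp: m1_def)
    moreover have "\<not> (n * a j \<le> x \<and> x - n * a j \<in> sumset A m)" if j: "j \<le> p" for j
    proof
      assume as: "n * a j \<le> x \<and> x - n * a j \<in> sumset A m"
      then have le: "x - n * a j \<le> m * N" using sumset_le[OF A_subset] by blast
      show False
      proof (cases "r \<le> j")
        case True
        then have "n * a r \<le> n * a j" using a_mono j by simp
        then show False using as mx(3) by linarith
      next
        case False
        then have "n * a j \<le> n * a (r - 1)" using a_mono r by simp
        then show False using le mx(2) as by linarith
      qed
    qed
    ultimately show ?thesis using mx(1) unfolding hk_points_def frob_covered_def by auto
  qed
qed

lemma finite_hk_points: "finite (hk_points n)"
  using hk_points_subset_cover
  by (rule finite_subset) (auto simp: cover_low_def cover_strip_def)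

lemma inside_strips_disjoint:
  assumes "r < r'" "r' \<le> p"
  shows "inside_strip n r \<inter> inside_strip n r' = {}"
proof (rule ccontr)
  have le: "n * a r \<le> n * a (r' - 1)" using a_mono assms by simp
  assume "inside_strip n r \<inter> inside_strip n r' \<noteq> {}"
  then obtain m x where "n * a (r' - 1) + m * N + c + 1 \<le> x" "x < n * a r - c"
    unfolding inside_strip_def by auto
  then show False using le by linarith
qed

lemma card_inside_low: "card (inside_low n) = (\<Sum>d\<in>{m1..<n}. d * N + 1 - c - c)"
  unfolding inside_low_def by (subst card_SigmaI) auto

lemma card_inside_strip:
  assumes "r \<in> {1..p}"
  shows "card (inside_strip n r) = tri_count N (n * a r - n * a (r - 1) - (2 * c + 1)) (strip_len n)"
proof -
  have "n * a (r - 1) \<le> n * a r" using a_mono assms by simp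
  moreover have "inj_on (\<lambda>(m, x). (n + m, x)) X" for X :: "(nat \<times> nat) set" by (rule inj_onI) auto
  ultimately show ?thesis
    unfolding inside_strip_def tri_count_def by (subst card_image) (auto intro: sum.cong)
qed

lemma card_cover_low: "card (cover_low n) = (\<Sum>d<n + m1. d * N + 1)"
  unfolding cover_low_def by (subst card_SigmaI) auto

lemma card_cover_strip:
  assumes "r \<in> {1..p}"
  shows "card (cover_strip n r) \<le> tri_count N (n * a r - n * a (r - 1) + 2 * c) (strip_len n)"
proof -
  have "card (cover_strip n r)
      \<le> card (SIGMA m:{..<strip_len n}. {n * a (r - 1) + m * N - c ..< n * a r + c})"
    unfolding cover_strip_def by (rule card_image_le) auto
  also have "\<dots> = (\<Sum>m<strip_len n. n * a r + c - (n * a (r - 1) + m * N - c))"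
    by (subst card_SigmaI) auto
  also have "\<dots> \<le> tri_count N (n * a r - n * a (r - 1) + 2 * c) (strip_len n)"
    unfolding tri_count_def by (intro sum_mono) auto
  finally show ?thesis .
qed

lemma card_hk_points_lower:
  assumes "m1 \<le> n"
  shows "(\<Sum>d\<in>{m1..<n}. d * N + 1 - c - c)
    + (\<Sum>r\<in>{1..p}. tri_count N (n * a r - n * a (r - 1) - (2 * c + 1)) (strip_len n))
    \<le> card (hk_points n)"
proof -
  have disj: "inside_strip n r \<inter> inside_strip n r' = {}" if "r \<in> {1..p}" "r' \<in> {1..p}" "r \<noteq> r'" for r r'
    using inside_strips_disjoint[of r r' n] inside_strips_disjoint[of r' r n] that
    by (cases "r < r'") (auto simp: Int_commute)
  have fin: "finite (inside_low n)" "finite (inside_strip n r)" for r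
    unfolding inside_low_def inside_strip_def by auto
  have "inside_low n \<inter> (\<Union>r\<in>{1..p}. inside_strip n r) = {}"
    unfolding inside_low_def inside_strip_def by auto
  then have "card (inside_low n \<union> (\<Union>r\<in>{1..p}. inside_strip n r))
      = card (inside_low n) + (\<Sum>r\<in>{1..p}. card (inside_strip n r))"
    using fin disj by (simp add: card_Un_disjoint card_UN_disjoint)
  moreover have "card (inside_low n \<union> (\<Union>r\<in>{1..p}. inside_strip n r)) \<le> card (hk_points n)"
    by (rule card_mono[OF finite_hk_points inside_subset_hk_points[OF assms]])
  ultimately show ?thesis by (simp add: card_inside_low card_inside_strip)
qed

lemma card_hk_points_upper:
  "card (hk_points n) \<le> (\<Sum>d<n + m1. d * N + 1)
    + (\<Sum>r\<in>{1..p}. tri_count N (n * a r - n * a (r - 1) + 2 * c) (strip_len n))"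
proof -
  have "card (hk_points n) \<le> card (cover_low n \<union> (\<Union>r\<in>{1..p}. cover_strip n r))"
    by (rule card_mono[OF _ hk_points_subset_cover]) (auto simp: cover_low_def cover_strip_def)
  also have "\<dots> \<le> card (cover_low n) + (\<Sum>r\<in>{1..p}. card (cover_strip n r))"
    using card_Un_le card_UN_le[of "{1..p}" "cover_strip n"] by (meson add_left_mono finite_atLeastAtMost le_trans)
  also have "\<dots> \<le> card (cover_low n)
      + (\<Sum>r\<in>{1..p}. tri_count N (n * a r - n * a (r - 1) + 2 * c) (strip_len n))"
    using card_cover_strip by (intro add_left_mono sum_mono) blast
  finally show ?thesis by (simp add: card_cover_low)
qed

lemma inside_low_sum_lower:
  assumes "m1 \<le> n"
  shows "real N * real n ^ 2 / 2 - (real N / 2 + 2 * real c) * real n - real m1 * real m1 * real N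
    \<le> real (\<Sum>d\<in>{m1..<n}. d * N + 1 - c - c)"
proof -
  define g where "g d = real d * real N - 2 * real c" for d
  have "g d \<le> real (d * N + 1 - c - c)" for d
  proof (cases "c + c \<le> d * N + 1")
    case True
    then show ?thesis unfolding g_def by (simp add: of_nat_diff)
  next
    case False
    then have "real (d * N) \<le> real (2 * c)" by (intro of_nat_mono) simp
    then show ?thesis unfolding g_def by simp
  qed
  then have "(\<Sum>d\<in>{m1..<n}. g d) \<le> real (\<Sum>d\<in>{m1..<n}. d * N + 1 - c - c)"
    unfolding of_nat_sum by (rule sum_mono)
  moreover have "(\<Sum>d<n. g d) = (\<Sum>d<m1. g d) + (\<Sum>d\<in>{m1..<n}. g d)"
    using sum.atLeastLessThan_concat[of 0 m1 n g] assms by (simp add: atLeast0LessThan)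
  moreover have "(\<Sum>d<n. g d) = real N * (real n * (real n - 1) / 2) - 2 * real c * real n"
    unfolding g_def by (simp add: sum_subtractf sum_distrib_right[symmetric] sum_lessThan_real algebra_simps)
  moreover have "(\<Sum>d<m1. g d) \<le> (\<Sum>d<m1. real m1 * real N)"
  proof (rule sum_mono)
    fix d assume "d \<in> {..<m1}"
    then have "real d * real N \<le> real m1 * real N" by (intro mult_right_mono) auto
    then show "g d \<le> real m1 * real N" unfolding g_def by simp
  qed
  ultimately show ?thesis by (simp add: algebra_simps power2_eq_square)
qed

lemma inside_strip_card_lower:
  assumes r: "1 \<le> r" "r \<le> p" and n: "2 * c + 1 \<le> n"
  shows "real n ^ 2 * real (gap r) ^ 2 / (2 * real N) - (2 * real c + 1) * real n
    \<le> real (tri_count N (n * a r - n * a (r - 1) - (2 * c + 1)) (strip_len n))"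
proof -
  define X where "X = n * gap r - (2 * c + 1)"
  define y k where "y = real n * real (gap r)" and "k = 2 * real c + 1"
  have "n \<le> n * gap r" using gap_pos[OF r] by simp
  then have "2 * c + 1 \<le> n * gap r" using n by linarith
  then have "real X = real (n * gap r) - real (2 * c + 1)" unfolding X_def by (rule of_nat_diff)
  then have X: "real X = y - k" unfolding y_def k_def by simp
  have "X \<le> n * N" unfolding X_def using gap_le[OF r(2)] by (meson diff_le_self le_trans mult_le_mono2)
  also have "\<dots> \<le> n * N * N" using N_pos by simp
  also have "\<dots> \<le> strip_len n * N" unfolding strip_len_def by (simp add: add_mult_distrib)
  finally have "real X ^ 2 / (2 * real N) \<le> real (tri_count N X (strip_len n))"
    by (rule tri_count_lower[OF N_pos])
  moreover have "y ^ 2 - 2 * k * (real n * real N) \<le> real X ^ 2"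
  proof -
    have "y \<le> real n * real N" unfolding y_def using gap_le[OF r(2)] by (simp add: mult_left_mono)
    then have "2 * k * y \<le> 2 * k * (real n * real N)" unfolding k_def by (simp add: mult_left_mono)
    moreover have "y ^ 2 - 2 * k * y \<le> (y - k) ^ 2" by (simp add: power2_eq_square algebra_simps)
    ultimately show ?thesis unfolding X by linarith
  qed
  then have "(y ^ 2 - 2 * k * (real n * real N)) / (2 * real N) \<le> real X ^ 2 / (2 * real N)"
    using N_pos by (simp add: divide_right_mono)
  moreover have "(y ^ 2 - 2 * k * (real n * real N)) / (2 * real N) = y ^ 2 / (2 * real N) - k * real n"
    using N_pos by (simp add: field_simps)
  moreover have "n * a r - n * a (r - 1) - (2 * c + 1) = X" unfolding X_def using gap_mult[OF r(2)] by simp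
  ultimately show ?thesis unfolding y_def k_def by (simp add: power_mult_distrib)
qed

lemma cover_strip_card_upper:
  assumes r: "1 \<le> r" "r \<le> p"
  shows "real (tri_count N (n * a r - n * a (r - 1) + 2 * c) (strip_len n))
    \<le> real n ^ 2 * real (gap r) ^ 2 / (2 * real N) + (2 * real c + real N) * real n
      + (2 * real c ^ 2 + 2 * real c)"
proof -
  define Y where "Y = n * gap r + 2 * c"
  define y where "y = real n * real (gap r)"
  have yN: "y \<le> real n * real N" unfolding y_def using gap_le[OF r(2)] by (simp add: mult_left_mono)
  have Y: "real Y = y + 2 * real c" unfolding Y_def y_def by simp
  have "real Y ^ 2 = y ^ 2 + 4 * real c * y + 4 * real c ^ 2"
    unfolding Y by (simp add: power2_eq_square algebra_simps)
  also have "\<dots> \<le> y ^ 2 + 4 * real c * (real n * real N) + 4 * real c ^ 2"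
    using yN by (simp add: mult_left_mono)
  finally have "real Y ^ 2 \<le> y ^ 2 + 4 * real c * (real n * real N) + 4 * real c ^ 2" .
  then have "real Y ^ 2 / (2 * real N)
      \<le> (y ^ 2 + 4 * real c * (real n * real N) + 4 * real c ^ 2) / (2 * real N)"
    using N_pos by (simp add: divide_right_mono)
  also have "\<dots> = y ^ 2 / (2 * real N) + 2 * real c * real n + 2 * real c ^ 2 / real N"
    using N_pos by (simp add: field_simps)
  also have "\<dots> \<le> y ^ 2 / (2 * real N) + 2 * real c * real n + 2 * real c ^ 2"
    using N_pos by (simp add: divide_le_eq mult_le_cancel_left1)
  finally have "real Y ^ 2 / (2 * real N) \<le> y ^ 2 / (2 * real N) + 2 * real c * real n + 2 * real c ^ 2" .
  moreover have "real (tri_count N Y (strip_len n)) \<le> real Y ^ 2 / (2 * real N) + real Y"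
    by (rule tri_count_upper[OF N_pos])
  moreover have "real Y \<le> real N * real n + 2 * real c" using Y yN by (simp add: mult.commute)
  moreover have "n * a r - n * a (r - 1) + 2 * c = Y" unfolding Y_def using gap_mult[OF r(2)] by simp
  ultimately show ?thesis unfolding y_def by (simp add: power_mult_distrib algebra_simps)
qed

lemma card_hk_points_ge:
  assumes n: "m1 \<le> n" "2 * c + 1 \<le> n"
  shows "ehk * real n ^ 2 - (real N / 2 + 2 * real c + real p * (2 * real c + 1)) * real n
      - real m1 * real m1 * real N \<le> real (card (hk_points n))"
proof -
  have "(\<Sum>r\<in>{1..p}. real n ^ 2 * real (gap r) ^ 2 / (2 * real N) - (2 * real c + 1) * real n)
    \<le> (\<Sum>r\<in>{1..p}. real (tri_count N (n * a r - n * a (r - 1) - (2 * c + 1)) (strip_len n)))"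
    by (rule sum_mono) (rule inside_strip_card_lower, use n(2) in auto)
  moreover have "(\<Sum>r\<in>{1..p}. real n ^ 2 * real (gap r) ^ 2 / (2 * real N) - (2 * real c + 1) * real n)
    = real n ^ 2 * (\<Sum>r\<in>{1..p}. real (gap r) ^ 2) / (2 * real N) - real p * (2 * real c + 1) * real n"
    by (simp add: sum_subtractf sum_divide_distrib[symmetric] sum_distrib_left[symmetric])
  moreover have "real (\<Sum>d\<in>{m1..<n}. d * N + 1 - c - c)
    + (\<Sum>r\<in>{1..p}. real (tri_count N (n * a r - n * a (r - 1) - (2 * c + 1)) (strip_len n)))
    \<le> real (card (hk_points n))"
    using of_nat_mono[OF card_hk_points_lower[OF n(1)], where 'a = real]
    by (simp only: of_nat_add of_nat_sum)
  ultimately show ?thesis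
    using inside_low_sum_lower[OF n(1)] unfolding ehk_def by (simp add: algebra_simps)
qed

lemma card_hk_points_le:
  "real (card (hk_points n)) \<le> ehk * real n ^ 2
    + (real N * real m1 + 1 + real p * (2 * real c + real N)) * real n
    + (real N * real m1 ^ 2 / 2 + real m1 + real p * (2 * real c ^ 2 + 2 * real c))"
proof -
  have "(\<Sum>r\<in>{1..p}. real (tri_count N (n * a r - n * a (r - 1) + 2 * c) (strip_len n)))
    \<le> (\<Sum>r\<in>{1..p}. real n ^ 2 * real (gap r) ^ 2 / (2 * real N) + (2 * real c + real N) * real n
        + (2 * real c ^ 2 + 2 * real c))"
    by (rule sum_mono) (rule cover_strip_card_upper, auto)
  moreover have "(\<Sum>r\<in>{1..p}. real n ^ 2 * real (gap r) ^ 2 / (2 * real N) + (2 * real c + real N) * real n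
        + (2 * real c ^ 2 + 2 * real c))
    = real n ^ 2 * (\<Sum>r\<in>{1..p}. real (gap r) ^ 2) / (2 * real N)
      + real p * ((2 * real c + real N) * real n + (2 * real c ^ 2 + 2 * real c))"
    by (simp add: sum.distrib sum_divide_distrib[symmetric] sum_distrib_left[symmetric] distrib_left)
  moreover have "real (\<Sum>d<n + m1. d * N + 1)
      = real N * (real (n + m1) * (real (n + m1) - 1) / 2) + real (n + m1)"
    by (simp add: of_nat_sum sum.distrib sum_distrib_right[symmetric] sum_lessThan_real algebra_simps)
  moreover have "real N * (real (n + m1) * (real (n + m1) - 1) / 2) \<le> real N * (real (n + m1) ^ 2 / 2)"
    by (intro mult_left_mono) (auto simp: power2_eq_square algebra_simps)
  moreover have "real (card (hk_points n)) \<le> real (\<Sum>d<n + m1. d * N + 1)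
      + (\<Sum>r\<in>{1..p}. real (tri_count N (n * a r - n * a (r - 1) + 2 * c) (strip_len n)))"
    using of_nat_mono[OF card_hk_points_upper[of n], where 'a = real]
    by (simp only: of_nat_add of_nat_sum)
  moreover have "real N * (real (n + m1) ^ 2 / 2)
      = real N * real n ^ 2 / 2 + real N * real m1 * real n + real N * real m1 ^ 2 / 2"
    by (simp add: power2_eq_square algebra_simps)
  moreover have "ehk * real n ^ 2
      = real N * real n ^ 2 / 2 + real n ^ 2 * (\<Sum>r\<in>{1..p}. real (gap r) ^ 2) / (2 * real N)"
    unfolding ehk_def by (simp add: algebra_simps)
  moreover have "(real N * real m1 + 1 + real p * (2 * real c + real N)) * real n
      + (real N * real m1 ^ 2 / 2 + real m1 + real p * (2 * real c ^ 2 + 2 * real c))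
    = real N * real m1 * real n + real N * real m1 ^ 2 / 2 + (real n + real m1)
      + real p * ((2 * real c + real N) * real n + (2 * real c ^ 2 + 2 * real c))"
    by (simp add: algebra_simps)
  moreover have "real (n + m1) = real n + real m1" by simp
  ultimately show ?thesis by linarith
qed

lemma hk_points_asymptotics: "(\<lambda>n. real (card (hk_points n)) / real n ^ 2) \<longlonglongrightarrow> ehk"
proof (rule tendsto_div_square_of_bounds)
  show "\<forall>\<^sub>F n in sequentially. ehk * real n ^ 2
      - (real N / 2 + 2 * real c + real p * (2 * real c + 1)) * real n - real m1 * real m1 * real N
      \<le> real (card (hk_points n))"
    using eventually_ge_at_top[of "max m1 (2 * c + 1)"]
    by eventually_elim (rule card_hk_points_ge; simp)
  show "\<forall>\<^sub>F n in sequentially. real (card (hk_points n)) \<le> ehk * real n ^ 2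
      + (real N * real m1 + 1 + real p * (2 * real c + real N)) * real n
      + (real N * real m1 ^ 2 / 2 + real m1 + real p * (2 * real c ^ 2 + 2 * real c))"
    by (intro always_eventually allI card_hk_points_le)
qed

lemma hk_length_eq_card_hk_points: "hk_length TYPE('k::field) G n = enat (card (hk_points n))"
proof -
  have "finite (semigroup_gen G - frobenius_exps G n)"
    using bij_betw_finite[OF bij_betw_hk_points] finite_hk_points by blast
  then show ?thesis
    using hk_length_eq_card[OF finite_G] bij_betw_same_card[OF bij_betw_hk_points] by simp
qed

end

theorem theorem5p1:
  fixes p :: nat and n :: "nat \<Rightarrow> nat"
  assumes "p \<ge> 1"
    and "n 1 > 0"
    and "\<And>r. 1 \<le> r \<Longrightarrow> r < p \<Longrightarrow> n r < n (r + 1)"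
    and "Gcd (n ` {1..p}) = 1"
    and "n 0 = 0"
  shows "has_ehk TYPE('k::field) {(n r, n p - n r) | r. r \<le> p}
           (1 + (1 / real (n p)) * (\<Sum>r=1..p. (real (n r) - 1) * (real (n r) - real (n (r - 1)))))"
proof -
  have step: "n r < n (Suc r)" if "r \<in> {..<p}" for r
    using assms(2,3,5) that by (cases r) auto
  have "n i < n j" if "i < j" "j \<le> p" for i j
    using lift_Suc_mono_less_ivl[of "{..<p}" n, OF step that(1)] that(2)
    by (meson lessThan_iff atLeastLessThan_iff order_less_le_trans subsetI)
  then interpret hk_semigroup n p using assms(1,5) by unfold_locales
  have "{..p} = insert 0 {1..p}" by auto
  then have "Gcd A = 1" using assms(4,5) by simp
  then obtain c m0 where "\<forall>m y. m0 \<le> m \<longrightarrow> c \<le> y \<longrightarrow> y + c \<le> m * N \<longrightarrow> y \<in> sumset A m"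
    using sumset_contains_interval[OF A_subset zero_in_A N_in_A] by blast
  then interpret hk_semigroup_interval n p c m0 by unfold_locales blast
  from has_ehk_if_tendsto[OF hk_length_eq_card_hk_points hk_points_asymptotics]
  show ?thesis by (simp add: ehk_eq)
qed

end
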